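(* Let Assumptions A1, A2 and A3 hold, $\kappa>1$, and run Algorithm PBA with $\alpha = \frac{1}{L}$, $\eta = \frac{\sqrt{\kappa}-1}{\sqrt{\kappa}+1}$, $0<\beta \le \frac{1}{2}(L_\Phi + \Gamma + \kappa^2)^{-1}$, and $T \ge \frac{\ln(8(1+\kappa))}{\ln((1-\kappa^{-1/2})^{-1})}$. Writing $z_k=(x_k,y_k)$, for all $k$, $$\mathrm{dist}\big(\mathbf{0},\partial_z H(z_{k+1})\big)\le \frac{2}{\beta}\|x_{k+1}-x_k\| + \sqrt{\Gamma}\,\|y_{k+1}-y^*(x_k)\| + 2\big(2.5^{T+1}+\kappa\big)\|y_{k+2}-y^*(x_{k+1})\|.$$
   Context: Problem: $\min_{x\in\mathbb{R}^d} \Phi(x)+h(x)$ where $\Phi(x) := f(x,y^*(x))$ and $y^*(x) := \arg\min_{y\in\mathbb{R}^p} g(x,y)$, with $f,g:\mathbb{R}^d\times\mathbb{R}^p\to\mathbb{R}$ jointly continuously differentiable. Write $z=(x,y)$. Assumption A1: (1) $g(x,\cdot)$ is $\mu$-strongly convex for every $x$ ($\Phi$ may be nonconvex); (2) $h:\mathbb{R}^d\to\mathbb{R}\cup\{+\infty\}$ is proper and lower-semicontinuous (possibly nonsmooth and nonconvex); (3) $\Phi+h$ is bounded below and has bounded sub-level sets. Assumption A2: (1) $f$ is $M$-Lipschitz, and $\nabla f$ and $\nabla g$ are $L$-Lipschitz (in $z$); (2) the Jacobian $\nabla_x\nabla_y g$ is $\tau$-Lipschitz and the Hessian $\nabla_y^2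 g$ is $\rho$-Lipschitz (in $z$). Assumption A3: the function $(x,y)\mapsto\|y^T(x,y)-y^*(x)\|^2$ has nonempty limiting subdifferential $\partial_{(x,y)}$ at every point. Set $\kappa = L/\mu$, $L_\Phi = L + \frac{2L^2+\tau M^2}{\mu} + \frac{\rho L M + L^3 + \tau M L}{\mu^2} + \frac{\rho L^2 M}{\mu^3}$, and $\Gamma = 3L^2 + \frac{3\tau^2M^2}{\mu^2} + 6L^2(1+\sqrt{\kappa})^2\big(\kappa + \frac{\rho M}{\mu^2}\big)^2$. Proximal map: $\mathrm{prox}_{\beta h}(v) := \arg\min_u \{\beta h(u) + \frac12\|u-v\|^2\}$ (possibly set-valued). Algorithm PBA (proximal BiO-AIDm) with parameters $\alpha,\beta,\eta>0$, $T\in\mathbb{N}$, initial $x_0,y_0$: for $k=0,1,2,\dots$: set $y^0(x_k,y_k)=u_0=y_k$; for $t=1,\dots,T$: $u_t = y^{t-1}(x_k,y_k) - \alpha\nabla_y g(x_k, y^{t-1}(x_k,y_k))$, $y^t(x_k,y_k) = u_t + \eta(u_t - u_{t-1})$; set $y_{k+1} = y^T(x_k,y_k)$; compute $\widehat\nabla\Phi(x_k) = \nabla_x f(x_k,y_{k+1}) - \nabla_x\nabla_y g(x_k,y_{k+1})\hat v_k$ where $\hat v_k$ is the exact solution of $\nabla_y^2 g(x_k,y_{k+1})v = \nabla_y f(x_k,y_{k+1})$; update $x_{k+1}\in \mathrm{prox}_{\beta h}(x_k - \beta\widehat\nabla\Phi(x_k))$. For general $(x,y')$, $y^T(x,y')$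 denotes the output of the same $T$-step inner loop applied to $g(x,\cdot)$ with initial point $y'$. Potential function: $H(x,y') := \Phi(x)+h(x)+\frac78\|y^T(x,y')-y^*(x)\|^2$. Limiting subdifferential: the Fréchet subdifferential of $F$ at $x$ is $\widehat\partial F(x) = \{u: \liminf_{z\to x, z\ne x} \frac{F(z)-F(x)-u^\top(z-x)}{\|z-x\|}\ge 0\}$; the limiting subdifferential $\partial F(x)$ is the set of $u$ such that there exist $x_k\to x$ with $F(x_k)\to F(x)$ and $u_k\in\widehat\partial F(x_k)$ with $u_k\to u$; $\mathrm{dist}(\mathbf{0},S)=\inf_{u\in S}\|u\|$. *)

theory Defs
  imports "HOL-Analysis.Analysis" "HOL-Library.Extended_Real" "HOL-Library.Liminf_Limsup"
begin

definition grad :: "('v::real_inner \<Rightarrow> real) \<Rightarrow> 'v \<Rightarrow> 'v" where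
  "grad F z = (THE D. GDERIV F z :> D)"

definition grad_x :: "('a::real_inner \<times> 'b::real_inner \<Rightarrow> real) \<Rightarrow> 'a \<times> 'b \<Rightarrow> 'a" where
  "grad_x F z = fst (grad F z)"
definition grad_y :: "('a::real_inner \<times> 'b::real_inner \<Rightarrow> real) \<Rightarrow> 'a \<times> 'b \<Rightarrow> 'b" where
  "grad_y F z = snd (grad F z)"

definition hess_yy :: "('a::euclidean_space \<times> 'b::euclidean_space \<Rightarrow> real) \<Rightarrow> 'a \<times> 'b \<Rightarrow> 'b \<Rightarrow> 'b" where
  "hess_yy G z = frechet_derivative (\<lambda>y. grad_y G (fst z, y)) (at (snd z))"

(* Jacobian \<nabla>_x \<nabla>_y G (x,y) (a d x p matrix): the adjoint (transpose) of the
   derivative of x \<mapsto> \<nabla>_y G(x,y); so (\<nabla>_x\<nabla>_y G) v = \<nabla>_x <\<nabla>_y G(x,y), v> *)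
definition jac_xy :: "('a::euclidean_space \<times> 'b::euclidean_space \<Rightarrow> real) \<Rightarrow> 'a \<times> 'b \<Rightarrow> 'b \<Rightarrow> 'a" where
  "jac_xy G z = adjoint (frechet_derivative (\<lambda>x. grad_y G (x, snd z)) (at (fst z)))"

definition strongly_convex :: "real \<Rightarrow> ('b::real_normed_vector \<Rightarrow> real) \<Rightarrow> bool" where
  "strongly_convex \<mu> F \<longleftrightarrow> (\<forall>y y' u. 0 \<le> u \<and> u \<le> 1 \<longrightarrow>
     F (u *\<^sub>R y + (1 - u) *\<^sub>R y') \<le> u * F y + (1 - u) * F y' - \<mu> / 2 * u * (1 - u) * (norm (y - y'))\<^sup>2)"

definition ystar :: "('a \<times> 'b \<Rightarrow> real) \<Rightarrow> 'a \<Rightarrow> 'b" where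
  "ystar G x = (THE y. \<forall>y'. G (x, y) \<le> G (x, y'))"

definition Phi :: "('a \<times> 'b \<Rightarrow> real) \<Rightarrow> ('a \<times> 'b \<Rightarrow> real) \<Rightarrow> 'a \<Rightarrow> real" where
  "Phi F G x = F (x, ystar G x)"

fun inner_loop :: "('a::real_inner \<times> 'b::real_inner \<Rightarrow> real) \<Rightarrow> real \<Rightarrow> real \<Rightarrow> 'a \<Rightarrow> 'b \<Rightarrow> nat \<Rightarrow> 'b \<times> 'b" where
  "inner_loop G \<alpha> \<eta> x y' 0 = (y', y')"
| "inner_loop G \<alpha> \<eta> x y' (Suc t) =
     (let (u, y) = inner_loop G \<alpha> \<eta> x y' t;
          u' = y - \<alpha> *\<^sub>R grad_y G (x, y)
      in (u', u' + \<eta> *\<^sub>R (u' - u)))"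

definition yT :: "('a::real_inner \<times> 'b::real_inner \<Rightarrow> real) \<Rightarrow> real \<Rightarrow> real \<Rightarrow> nat \<Rightarrow> 'a \<Rightarrow> 'b \<Rightarrow> 'b" where
  "yT G \<alpha> \<eta> T x y' = snd (inner_loop G \<alpha> \<eta> x y' T)"

definition prox :: "real \<Rightarrow> ('a::real_normed_vector \<Rightarrow> ereal) \<Rightarrow> 'a \<Rightarrow> 'a set" where
  "prox \<beta> h v = {u. \<forall>w. ereal \<beta> * h u + ereal ((norm (u - v))\<^sup>2 / 2)
                         \<le> ereal \<beta> * h w + ereal ((norm (w - v))\<^sup>2 / 2)}"

definition frechet_subdiff :: "('v::real_inner \<Rightarrow> ereal) \<Rightarrow> 'v \<Rightarrow> 'v set" where
  "frechet_subdiff F x = {u. \<bar>F x\<bar> \<noteq> \<infinity> \<and>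
     Liminf (at x) (\<lambda>z. (F z - F x - ereal (u \<bullet> (z - x))) / ereal (norm (z - x))) \<ge> 0}"

definition limiting_subdiff :: "('v::real_inner \<Rightarrow> ereal) \<Rightarrow> 'v \<Rightarrow> 'v set" where
  "limiting_subdiff F x = {u. \<exists>xs us. xs \<longlonglongrightarrow> x \<and> (\<lambda>k. F (xs k)) \<longlonglongrightarrow> F x \<and>
       (\<forall>k. us k \<in> frechet_subdiff F (xs k)) \<and> us \<longlonglongrightarrow> u}"

(* dist(0,S) = inf_{u in S} ||u||  (= +infinity for S empty) *)
definition dist0 :: "'v::real_normed_vector set \<Rightarrow> ereal" where
  "dist0 S = (INF u\<in>S. ereal (norm u))"

definition potH :: "('a::real_inner \<times> 'b::real_inner \<Rightarrow> real) \<Rightarrow> ('a \<times> 'b \<Rightarrow> real) \<Rightarrow> ('a \<Rightarrow> ereal)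
     \<Rightarrow> real \<Rightarrow> real \<Rightarrow> nat \<Rightarrow> 'a \<times> 'b \<Rightarrow> ereal" where
  "potH F G h \<alpha> \<eta> T z = ereal (Phi F G (fst z)) + h (fst z)
      + ereal (7/8 * (norm (yT G \<alpha> \<eta> T (fst z) (snd z) - ystar G (fst z)))\<^sup>2)"

end

theory Submission
  imports Defs
begin

text \<open>The vector exhibited in the limiting subdifferential of the potential at
  \<open>z\<^sub>k\<^sub>+\<^sub>1\<close> is the gradient of its smooth part \<open>\<Phi>(x) + 7/8 \<parallel>y\<^sup>T(x, y') - y\<^sup>*(x)\<parallel>\<^sup>2\<close>
  plus the slope \<open>(v - x\<^sub>k\<^sub>+\<^sub>1) / \<beta>\<close> of the quadratic minorant of \<open>h\<close> provided by the proximal step.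
  Here \<open>\<nabla>\<Phi>\<close> comes from implicit differentiation of \<open>\<nabla>\<^sub>y g(x, y\<^sup>*(x)) = 0\<close>. Its norm is
  controlled by the Lipschitz continuity of the hypergradient map
  \<open>(x, y) \<mapsto> \<nabla>\<^sub>x f - \<nabla>\<^sub>x\<nabla>\<^sub>y g (\<nabla>\<^sub>y\<^sup>2 g)\<^sup>-\<^sup>1 \<nabla>\<^sub>y f\<close>, of \<open>y\<^sup>*\<close> (constant \<open>\<kappa>\<close>) and of the
  accelerated inner loop (constant \<open>(5/2)\<^sup>T\<close> up to a factor); the step size condition on \<open>\<beta>\<close>
  absorbs the contribution of \<open>x\<^sub>k\<^sub>+\<^sub>1 - x\<^sub>k\<close> to the change of the hypergradient.\<close>

section \<open>Gradients, derivatives and symmetry of Hessians\<close>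

lemma has_derivative_grad:
  fixes F :: "'v::euclidean_space \<Rightarrow> real"
  assumes "F differentiable (at z)"
  shows "(F has_derivative (\<lambda>h. h \<bullet> grad F z)) (at z)"
proof -
  obtain D where D: "(F has_derivative D) (at z)" using assms differentiable_def by blast
  define v where "v = adjoint D 1"
  have Dv: "D = (\<lambda>h. h \<bullet> v)"
    unfolding v_def using adjoint_works[OF has_derivative_linear[OF D]] by (auto simp: fun_eq_iff)
  have G: "GDERIV F z :> v" using D Dv by (simp add: gderiv_def)
  have "v' = v" if "GDERIV F z :> v'" for v'
  proof -
    have "(\<lambda>h. h \<bullet> v') = (\<lambda>h. h \<bullet> v)"
      using has_derivative_unique that G by (auto simp: gderiv_def)
    then have "(v' - v) \<bullet> v' = (v' - v) \<bullet> v" by metis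
    then have "(v' - v) \<bullet> (v' - v) = 0" by (simp add: inner_diff_right)
    then show ?thesis by simp
  qed
  then have "grad F z = v" unfolding grad_def using G by blast
  then show ?thesis using G by (simp add: gderiv_def)
qed

lemma has_derivative_partial_y:
  fixes F :: "'a::euclidean_space \<times> 'b::euclidean_space \<Rightarrow> real"
  assumes "F differentiable (at (x, y))"
  shows "((\<lambda>y. F (x, y)) has_derivative (\<lambda>k. k \<bullet> grad_y F (x, y))) (at y)"
proof -
  have "((\<lambda>y. (x, y)) has_derivative (\<lambda>k. (0, k))) (at y)"
    by (auto intro!: derivative_eq_intros)
  from has_derivative_compose[OF this has_derivative_grad[OF assms]]
  have "((\<lambda>y. F (x, y)) has_derivative (\<lambda>k. (0, k) \<bullet> grad F (x, y))) (at y)" by simp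
  moreover have "(\<lambda>k. (0::'a, k) \<bullet> grad F (x, y)) = (\<lambda>k. k \<bullet> grad_y F (x, y))"
    by (auto simp: grad_y_def inner_prod_def fun_eq_iff split: prod.splits)
  ultimately show ?thesis by simp
qed

lemma has_derivative_along_line:
  fixes F :: "'v::real_inner \<Rightarrow> real"
  assumes "\<And>y. (F has_derivative (\<lambda>k. k \<bullet> Gr y)) (at y)"
  shows "((\<lambda>s. F (p + s *\<^sub>R d)) has_real_derivative (d \<bullet> Gr (p + t *\<^sub>R d))) (at t)"
proof -
  have "((\<lambda>s. p + s *\<^sub>R d) has_derivative (\<lambda>s. s *\<^sub>R d)) (at t)"
    by (auto intro!: derivative_eq_intros)
  from has_derivative_compose[OF this assms]
  have "((\<lambda>s. F (p + s *\<^sub>R d)) has_derivative (\<lambda>s. (s *\<^sub>R d) \<bullet> Gr (p + t *\<^sub>R d))) (at t)" by simp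
  moreover have "(\<lambda>s. (s *\<^sub>R d) \<bullet> Gr (p + t *\<^sub>R d)) = (*) (d \<bullet> Gr (p + t *\<^sub>R d))"
    by (auto simp: fun_eq_iff)
  ultimately show ?thesis by (simp add: has_field_derivative_def)
qed

lemma norm_fst_le_norm: "norm (fst z) \<le> norm (z :: 'a::real_normed_vector \<times> 'b::real_normed_vector)"
  by (metis norm_fst_le prod.collapse)

lemma norm_snd_le_norm: "norm (snd z) \<le> norm (z :: 'a::real_normed_vector \<times> 'b::real_normed_vector)"
  by (metis norm_snd_le prod.collapse)

lemma differentiable_fst_comp: "f differentiable (at x) \<Longrightarrow> (\<lambda>x. fst (f x)) differentiable (at x)"
  using differentiable_compose[of fst f x UNIV] bounded_linear_imp_differentiable[OF bounded_linear_fst]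
  by auto

lemma differentiable_snd_comp: "f differentiable (at x) \<Longrightarrow> (\<lambda>x. snd (f x)) differentiable (at x)"
  using differentiable_compose[of snd f x UNIV] bounded_linear_imp_differentiable[OF bounded_linear_snd]
  by auto

lemma has_derivative_norm_le_lipschitz:
  fixes F :: "'c::real_normed_vector \<Rightarrow> 'd::real_normed_vector"
  assumes D: "(F has_derivative D) (at p)"
    and lip: "\<And>a b. norm (F a - F b) \<le> c * norm (a - b)"
  shows "norm (D v) \<le> c * norm v"
proof (cases "v = 0")
  case True
  then show ?thesis using linear_0[OF has_derivative_linear[OF D]] by simp
next
  case False
  have lin: "linear D" using D has_derivative_linear by blast
  have nv: "norm v > 0" using False by simp
  show ?thesis
  proof (rule field_le_epsilon)
    fix e :: real assume e: "e > 0"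
    obtain d where d: "d > 0" and dd: "\<And>y. norm (y - p) < d \<Longrightarrow>
        norm (F y - F p - D (y - p)) \<le> e / norm v * norm (y - p)"
      using D e nv unfolding has_derivative_at_alt by (meson divide_pos_pos)
    define t where "t = d / (2 * norm v)"
    have t: "t > 0" "t * norm v < d" using d nv by (simp_all add: t_def)
    then have r: "norm (F (p + t *\<^sub>R v) - F p - D (t *\<^sub>R v)) \<le> e / norm v * (t * norm v)"
      using dd[of "p + t *\<^sub>R v"] by simp
    have "t * norm (D v) = norm (D (t *\<^sub>R v))" using t linear_cmul[OF lin] by simp
    also have "\<dots> \<le> norm (F (p + t *\<^sub>R v) - F p) + norm (F (p + t *\<^sub>R v) - F p - D (t *\<^sub>R v))"
      using norm_triangle_ineq4[of "F (p + t *\<^sub>R v) - F p" "F (p + t *\<^sub>R v) - F p - D (t *\<^sub>R v)"]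
      by simp
    also have "\<dots> \<le> c * (t * norm v) + e / norm v * (t * norm v)"
      using lip[of "p + t *\<^sub>R v" p] r t by (intro add_mono) auto
    finally have "t * norm (D v) \<le> t * (c * norm v + e)"
      using nv by (simp add: algebra_simps)
    then show "norm (D v) \<le> c * norm v + e" using t by simp
  qed
qed

lemma has_derivative_strongly_monotone:
  fixes F :: "'c::real_inner \<Rightarrow> 'c"
  assumes D: "(F has_derivative D) (at p)"
    and mono: "\<And>a b. (F a - F b) \<bullet> (a - b) \<ge> m * (norm (a - b))\<^sup>2"
  shows "D v \<bullet> v \<ge> m * (norm v)\<^sup>2"
proof (cases "v = 0")
  case True
  then show ?thesis using linear_0[OF has_derivative_linear[OF D]] by simp
next
  case False
  have lin: "linear D" using D has_derivative_linear by blast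
  have nv: "norm v > 0" using False by simp
  have "m * (norm v)\<^sup>2 \<le> D v \<bullet> v + e" if e: "e > 0" for e
  proof -
    define e1 where "e1 = e / (norm v)\<^sup>2"
    have e1: "e1 > 0" using e nv by (simp add: e1_def)
    obtain d where d: "d > 0" and dd: "\<And>y. norm (y - p) < d \<Longrightarrow>
        norm (F y - F p - D (y - p)) \<le> e1 * norm (y - p)"
      using D e1 unfolding has_derivative_at_alt by blast
    define t where "t = d / (2 * norm v)"
    have t: "t > 0" "t * norm v < d" using d nv by (simp_all add: t_def)
    define R where "R = F (p + t *\<^sub>R v) - F p - D (t *\<^sub>R v)"
    have r: "norm R \<le> e1 * (t * norm v)"
      using dd[of "p + t *\<^sub>R v"] t by (simp add: R_def)
    have "m * (norm (t *\<^sub>R v))\<^sup>2 \<le> (F (p + t *\<^sub>R v) - F p) \<bullet> (t *\<^sub>R v)"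
      using mono[of "p + t *\<^sub>R v" p] by simp
    also have "F (p + t *\<^sub>R v) - F p = t *\<^sub>R D v + R" by (simp add: R_def linear_cmul[OF lin])
    also have "(t *\<^sub>R D v + R) \<bullet> (t *\<^sub>R v) = t\<^sup>2 * (D v \<bullet> v) + t * (R \<bullet> v)"
      by (simp add: inner_add_left power2_eq_square algebra_simps)
    also have "t * (R \<bullet> v) \<le> t * (norm R * norm v)"
      using t by (intro mult_left_mono) (auto simp: norm_cauchy_schwarz)
    also have "t * (norm R * norm v) \<le> t * (e1 * (t * norm v) * norm v)"
      using t r by (intro mult_left_mono mult_right_mono) auto
    also have "t * (e1 * (t * norm v) * norm v) = t\<^sup>2 * e"
      using nv by (simp add: e1_def power2_eq_square)
    finally have "t\<^sup>2 * (m * (norm v)\<^sup>2) \<le> t\<^sup>2 * (D v \<bullet> v + e)"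
      using t by (simp add: power_mult_distrib algebra_simps)
    then show ?thesis using t by simp
  qed
  then show ?thesis by (rule field_le_epsilon)
qed

lemma norm_adjoint_le:
  fixes A :: "'n::euclidean_space \<Rightarrow> 'm::euclidean_space"
  assumes lin: "linear A" and bound: "\<And>v. norm (A v) \<le> c * norm v" and c0: "c \<ge> 0"
  shows "norm (adjoint A w) \<le> c * norm w"
proof -
  define a where "a = adjoint A w"
  have "(norm a)\<^sup>2 = A a \<bullet> w"
    using adjoint_works[OF lin, of a w] by (simp add: a_def power2_norm_eq_inner)
  also have "\<dots> \<le> norm (A a) * norm w" by (rule norm_cauchy_schwarz)
  also have "\<dots> \<le> c * norm a * norm w" using bound by (intro mult_right_mono) auto
  finally have "(norm a)\<^sup>2 \<le> c * norm a * norm w" .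
  then show ?thesis using c0
    by (cases "norm a = 0") (auto simp: a_def power2_eq_square mult.assoc)
qed

lemma lipschitz_derivative_linearization:
  fixes Gr :: "'v::real_normed_vector \<Rightarrow> 'w::real_normed_vector"
  assumes der: "\<And>y. (Gr has_derivative Hs y) (at y)"
    and lip: "\<And>y y'. onorm (\<lambda>v. Hs y v - Hs y' v) \<le> R * norm (y - y')"
    and R0: "R \<ge> 0" and a: "norm (a - y0) \<le> r" and b: "norm (b - y0) \<le> r"
  shows "norm (Gr b - Gr a - Hs y0 (b - a)) \<le> norm (b - a) * (R * r)"
proof (rule differentiable_bound_linearization[where S="cball y0 r"])
  fix t :: real assume t: "t \<in> {0..1}"
  have "a + t *\<^sub>R (b - a) = (1 - t) *\<^sub>R a + t *\<^sub>R b" by (simp add: algebra_simps)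
  moreover have "a \<in> cball y0 r" "b \<in> cball y0 r"
    using a b by (simp_all add: dist_norm norm_minus_commute)
  ultimately show "a + t *\<^sub>R (b - a) \<in> cball y0 r"
    using t convex_cball by (metis atLeastAtMost_iff convexD_alt)
next
  fix x assume "x \<in> cball y0 r"
  then show "(Gr has_derivative Hs x) (at x within cball y0 r)"
    using der has_derivative_at_withinI by blast
next
  fix x assume x: "x \<in> cball y0 r"
  have "onorm (Hs x - Hs y0) \<le> R * norm (x - y0)" using lip by (simp add: fun_diff_def)
  also have "\<dots> \<le> R * r"
    using x R0 by (intro mult_left_mono) (auto simp: dist_norm norm_minus_commute)
  finally show "onorm (Hs x - Hs y0) \<le> R * r" .
next
  show "y0 \<in> cball y0 r" using a by simp (metis norm_ge_zero order_trans)
qed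

lemma second_difference_mvt:
  fixes F :: "'v::real_inner \<Rightarrow> real"
  assumes dF: "\<And>y. (F has_derivative (\<lambda>k. k \<bullet> Gr y)) (at y)" and h: "h > 0"
  obtains s where "0 < s" "s < h"
    "F (y0 + h *\<^sub>R u + h *\<^sub>R v) - F (y0 + h *\<^sub>R u) - F (y0 + h *\<^sub>R v) + F y0
       = h * (u \<bullet> Gr (y0 + h *\<^sub>R v + s *\<^sub>R u) - u \<bullet> Gr (y0 + s *\<^sub>R u))"
proof -
  define k where "k s = F (y0 + h *\<^sub>R v + s *\<^sub>R u) - F (y0 + s *\<^sub>R u)" for s
  define k' where "k' s = u \<bullet> Gr (y0 + h *\<^sub>R v + s *\<^sub>R u) - u \<bullet> Gr (y0 + s *\<^sub>R u)" for s
  have D: "DERIV k s :> k' s" for s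
    unfolding k_def k'_def by (intro derivative_intros has_derivative_along_line[OF dF])
  have "continuous_on {0..h} k"
    by (meson D DERIV_isCont continuous_at_imp_continuous_on)
  moreover have "k differentiable (at s)" for s using D real_differentiable_def by blast
  ultimately obtain l s where s: "0 < s" "s < h" and l: "DERIV k s :> l" and "k h - k 0 = (h - 0) * l"
    using MVT[OF h] by blast
  moreover have "l = k' s" using DERIV_unique[OF l D] .
  moreover have "k h - k 0 = F (y0 + h *\<^sub>R u + h *\<^sub>R v) - F (y0 + h *\<^sub>R u) - F (y0 + h *\<^sub>R v) + F y0"
    by (simp add: k_def algebra_simps)
  ultimately show ?thesis using that by (simp add: k'_def)
qed

lemma second_difference_estimate:
  fixes F :: "'v::real_inner \<Rightarrow> real"
  assumes dF: "\<And>y. (F has_derivative (\<lambda>k. k \<bullet> Gr y)) (at y)"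
    and der: "\<And>y. (Gr has_derivative Hs y) (at y)"
    and lip: "\<And>y y'. onorm (\<lambda>v. Hs y v - Hs y' v) \<le> R * norm (y - y')"
    and R0: "R \<ge> 0" and lin: "\<And>y. linear (Hs y)" and h: "h > 0"
  shows "\<bar>F (y0 + h *\<^sub>R u + h *\<^sub>R v) - F (y0 + h *\<^sub>R u) - F (y0 + h *\<^sub>R v) + F y0 - h\<^sup>2 * (u \<bullet> Hs y0 v)\<bar>
     \<le> h ^ 3 * (R * norm u * norm v * (norm u + norm v))"
proof -
  obtain s where s: "0 < s" "s < h" and eq:
    "F (y0 + h *\<^sub>R u + h *\<^sub>R v) - F (y0 + h *\<^sub>R u) - F (y0 + h *\<^sub>R v) + F y0
       = h * (u \<bullet> Gr (y0 + h *\<^sub>R v + s *\<^sub>R u) - u \<bullet> Gr (y0 + s *\<^sub>R u))"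
    using second_difference_mvt[OF dF h] by blast
  define a where "a = y0 + s *\<^sub>R u"
  define b where "b = y0 + h *\<^sub>R v + s *\<^sub>R u"
  have na: "norm (a - y0) \<le> h * (norm u + norm v)"
    using s by (simp add: a_def algebra_simps mult_right_mono add_increasing2)
  have "norm (b - y0) \<le> norm (h *\<^sub>R v) + norm (s *\<^sub>R u)"
    using norm_triangle_ineq[of "h *\<^sub>R v" "s *\<^sub>R u"] by (simp add: b_def)
  also have "\<dots> \<le> h * (norm u + norm v)" using s h by (simp add: mult_right_mono algebra_simps)
  finally have nb: "norm (b - y0) \<le> h * (norm u + norm v)" .
  have ba: "b - a = h *\<^sub>R v" by (simp add: a_def b_def)
  have "\<bar>u \<bullet> Gr b - u \<bullet> Gr a - h * (u \<bullet> Hs y0 v)\<bar> = \<bar>u \<bullet> (Gr b - Gr a - Hs y0 (b - a))\<bar>"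
    unfolding ba using linear_cmul[OF lin] by (simp add: inner_diff_right)
  also have "\<dots> \<le> norm u * norm (Gr b - Gr a - Hs y0 (b - a))" by (rule Cauchy_Schwarz_ineq2)
  also have "\<dots> \<le> norm u * (norm (b - a) * (R * (h * (norm u + norm v))))"
    by (intro mult_left_mono lipschitz_derivative_linearization[OF der lip R0 na nb]) simp
  also have "\<dots> = h\<^sup>2 * (R * norm u * norm v * (norm u + norm v))"
    using h by (simp add: ba power2_eq_square algebra_simps)
  finally have est: "\<bar>u \<bullet> Gr b - u \<bullet> Gr a - h * (u \<bullet> Hs y0 v)\<bar>
      \<le> h\<^sup>2 * (R * norm u * norm v * (norm u + norm v))" .
  have "F (y0 + h *\<^sub>R u + h *\<^sub>R v) - F (y0 + h *\<^sub>R u) - F (y0 + h *\<^sub>R v) + F y0 - h\<^sup>2 * (u \<bullet> Hs y0 v)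
      = h * (u \<bullet> Gr b - u \<bullet> Gr a - h * (u \<bullet> Hs y0 v))"
    unfolding eq a_def b_def by (simp add: power2_eq_square algebra_simps)
  then show ?thesis
    using mult_left_mono[OF est, of h] h by (simp add: abs_mult power2_eq_square power3_eq_cube mult.assoc)
qed

text \<open>The two second differences in directions \<open>u, v\<close> and \<open>v, u\<close> coincide, so both
  \<open>u \<bullet> Hs y0 v\<close> and \<open>v \<bullet> Hs y0 u\<close> are within \<open>O(h)\<close> of the same quotient by \<open>h\<^sup>2\<close>.\<close>
lemma hessian_symmetric:
  fixes F :: "'v::real_inner \<Rightarrow> real"
  assumes dF: "\<And>y. (F has_derivative (\<lambda>k. k \<bullet> Gr y)) (at y)"
    and der: "\<And>y. (Gr has_derivative Hs y) (at y)"
    and lip: "\<And>y y'. onorm (\<lambda>v. Hs y v - Hs y' v) \<le> R * norm (y - y')"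
    and R0: "R \<ge> 0" and lin: "\<And>y. linear (Hs y)"
  shows "u \<bullet> Hs y0 v = v \<bullet> Hs y0 u"
proof -
  define C where "C = R * norm u * norm v * (norm u + norm v)"
  have C0: "C \<ge> 0" using R0 by (simp add: C_def)
  have bound: "\<bar>u \<bullet> Hs y0 v - v \<bullet> Hs y0 u\<bar> \<le> 2 * h * C" if h: "h > 0" for h
  proof -
    define \<Delta> where "\<Delta> = F (y0 + h *\<^sub>R u + h *\<^sub>R v) - F (y0 + h *\<^sub>R u) - F (y0 + h *\<^sub>R v) + F y0"
    have "\<bar>\<Delta> - h\<^sup>2 * (u \<bullet> Hs y0 v)\<bar> \<le> h ^ 3 * C"
      unfolding \<Delta>_def C_def by (rule second_difference_estimate[OF dF der lip R0 lin h])
    moreover have "\<bar>\<Delta> - h\<^sup>2 * (v \<bullet> Hs y0 u)\<bar> \<le> h ^ 3 * C"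
      using second_difference_estimate[OF dF der lip R0 lin h, of y0 v u]
      by (simp add: \<Delta>_def C_def algebra_simps)
    ultimately have "\<bar>h\<^sup>2 * (u \<bullet> Hs y0 v) - h\<^sup>2 * (v \<bullet> Hs y0 u)\<bar> \<le> h\<^sup>2 * (2 * h * C)"
      by (simp add: power3_eq_cube power2_eq_square)
    then show ?thesis using h by (simp add: right_diff_distrib[symmetric] abs_mult)
  qed
  have "\<bar>u \<bullet> Hs y0 v - v \<bullet> Hs y0 u\<bar> \<le> 0 + e" if e: "e > 0" for e
  proof -
    have "\<bar>u \<bullet> Hs y0 v - v \<bullet> Hs y0 u\<bar> \<le> 2 * (e / (2 * C + 1)) * C"
      using bound[of "e / (2 * C + 1)"] e C0 by (simp add: add_nonneg_pos)
    also have "\<dots> \<le> e" using e C0 by (simp add: field_simps)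
    finally show ?thesis by simp
  qed
  then have "\<bar>u \<bullet> Hs y0 v - v \<bullet> Hs y0 u\<bar> \<le> 0" by (rule field_le_epsilon)
  then show ?thesis by simp
qed

section \<open>Frechet and limiting subgradients, proximal maps\<close>

lemma Liminf_nonneg_if_eventually_ge:
  assumes "\<And>e. e > 0 \<Longrightarrow> eventually (\<lambda>z. ereal (- e) \<le> q z) F"
  shows "0 \<le> Liminf F q"
proof (rule ereal_le_epsilon2)
  fix e :: real assume "e > 0"
  then have "ereal (- e) \<le> Liminf F q" by (intro Liminf_bounded assms)
  then show "0 \<le> Liminf F q + ereal e" by (cases "Liminf F q") auto
qed

lemma has_derivative_eventually_ge:
  fixes S :: "'v::real_inner \<Rightarrow> real"
  assumes S: "(S has_derivative (\<lambda>w. w \<bullet> sv)) (at z1)" and e: "e > 0"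
  shows "eventually (\<lambda>z. z \<noteq> z1 \<and>
           S z - S z1 - (z - z1) \<bullet> sv - c * (norm (z - z1))\<^sup>2 \<ge> - e * norm (z - z1)) (at z1)"
proof -
  obtain d where d: "d > 0" and dd: "\<And>y. norm (y - z1) < d \<Longrightarrow>
      norm (S y - S z1 - (y - z1) \<bullet> sv) \<le> e / 2 * norm (y - z1)"
    using S e unfolding has_derivative_at_alt by (meson half_gt_zero)
  have "((\<lambda>z. c * norm (z - z1)) \<longlongrightarrow> c * norm (z1 - z1)) (at z1)"
    by (intro tendsto_intros)
  then have "eventually (\<lambda>z. c * norm (z - z1) < e / 2) (at z1)"
    using e by (intro order_tendstoD(2)) auto
  moreover have "eventually (\<lambda>z. z \<noteq> z1 \<and> norm (z - z1) < d) (at z1)"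
    using d by (auto simp: eventually_at dist_norm)
  ultimately show ?thesis
  proof eventually_elim
    case (elim z)
    have "S z - S z1 - (z - z1) \<bullet> sv \<ge> - (e / 2) * norm (z - z1)"
      using dd[of z] elim abs_ge_minus_self[of "S z - S z1 - (z - z1) \<bullet> sv"] by simp
    moreover have "c * (norm (z - z1))\<^sup>2 \<le> e / 2 * norm (z - z1)"
      using elim by (simp add: power2_eq_square mult.assoc[symmetric])
    ultimately show ?case using elim by (simp add: algebra_simps)
  qed
qed

lemma frechet_subdiff_add_smooth:
  fixes S :: "'v::real_inner \<Rightarrow> real" and k :: "'v \<Rightarrow> ereal"
  assumes S: "(S has_derivative (\<lambda>w. w \<bullet> sv)) (at z1)"
    and kfin: "\<bar>k z1\<bar> \<noteq> \<infinity>"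
    and kge: "\<And>z. k z \<ge> k z1 + ereal (b \<bullet> (z - z1) - c * (norm (z - z1))\<^sup>2)"
  shows "sv + b \<in> frechet_subdiff (\<lambda>z. ereal (S z) + k z) z1"
proof -
  obtain r1 where r1: "k z1 = ereal r1" using kfin by (cases "k z1") auto
  define q where "q z = (ereal (S z) + k z - (ereal (S z1) + k z1) - ereal ((sv + b) \<bullet> (z - z1)))
                        / ereal (norm (z - z1))" for z
  have "eventually (\<lambda>z. ereal (- e) \<le> q z) (at z1)" if "e > 0" for e
    using has_derivative_eventually_ge[OF S that, of c]
  proof eventually_elim
    case (elim z)
    then have n: "norm (z - z1) > 0" by simp
    show "ereal (- e) \<le> q z"
    proof (cases "k z")
      case PInf
      then show ?thesis using n by (simp add: q_def r1)
    next
      case MInf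
      then show ?thesis using kge[of z] r1 by simp
    next
      case (real rz)
      have "rz \<ge> r1 + (b \<bullet> (z - z1) - c * (norm (z - z1))\<^sup>2)" using kge[of z] r1 real by simp
      then have "- e * norm (z - z1) \<le> S z + rz - (S z1 + r1) - (sv + b) \<bullet> (z - z1)"
        using elim by (simp add: inner_add_left inner_commute algebra_simps)
      then show ?thesis using n by (simp add: q_def r1 real pos_le_divide_eq)
    qed
  qed
  then have "0 \<le> Liminf (at z1) q" by (rule Liminf_nonneg_if_eventually_ge)
  then show ?thesis using r1 unfolding frechet_subdiff_def q_def[abs_def] by simp
qed

lemma frechet_subdiff_subset_limiting_subdiff: "frechet_subdiff F x \<subseteq> limiting_subdiff F x"
proof
  fix u assume "u \<in> frechet_subdiff F x"
  then show "u \<in> limiting_subdiff F x"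
    unfolding limiting_subdiff_def by (intro CollectI exI[of _ "\<lambda>_. x"] exI[of _ "\<lambda>_. u"]) simp
qed

lemma dist0_le_norm: "u \<in> S \<Longrightarrow> dist0 S \<le> ereal (norm u)"
  unfolding dist0_def by (rule INF_lower)

lemma prox_not_infty:
  assumes "\<beta> > 0" and "u \<in> prox \<beta> h v" and "\<exists>x. h x \<noteq> \<infinity>"
  shows "h u \<noteq> \<infinity>"
proof
  assume hu: "h u = \<infinity>"
  obtain w where "h w \<noteq> \<infinity>" using assms(3) by blast
  then have "ereal \<beta> * h w + ereal ((norm (w - v))\<^sup>2 / 2) < \<infinity>"
    using assms(1) by (cases "h w") auto
  moreover have "ereal \<beta> * h u + ereal ((norm (u - v))\<^sup>2 / 2) \<le> ereal \<beta> * h w + ereal ((norm (w - v))\<^sup>2 / 2)"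
    using assms(2) unfolding prox_def by blast
  ultimately show False using hu assms(1) by simp
qed

text \<open>Expand \<open>\<parallel>x - v\<parallel>\<^sup>2 = \<parallel>x - u\<parallel>\<^sup>2 + 2 (x - u) \<bullet> (u - v) + \<parallel>u - v\<parallel>\<^sup>2\<close> in the optimality of \<open>u\<close>.\<close>
lemma prox_quadratic_minorant:
  fixes h :: "'a::real_inner \<Rightarrow> ereal"
  assumes beta: "\<beta> > 0" and u: "u \<in> prox \<beta> h v" and hu: "h u = ereal r1"
    and proper: "\<forall>x. h x \<noteq> -\<infinity>"
  shows "h x \<ge> h u + ereal (((1/\<beta>) *\<^sub>R (v - u)) \<bullet> (x - u) - 1/(2*\<beta>) * (norm (x - u))\<^sup>2)"
proof (cases "h x")
  case PInf then show ?thesis using hu by simp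
next
  case MInf then show ?thesis using proper by simp
next
  case (real r)
  have "ereal \<beta> * h u + ereal ((norm (u - v))\<^sup>2 / 2) \<le> ereal \<beta> * h x + ereal ((norm (x - v))\<^sup>2 / 2)"
    using u unfolding prox_def by blast
  then have "\<beta> * r1 + (norm (u - v))\<^sup>2 / 2 \<le> \<beta> * r + (norm (x - v))\<^sup>2 / 2"
    using hu real by simp
  moreover have "(norm (x - v))\<^sup>2 = (norm (x - u))\<^sup>2 + 2 * ((x - u) \<bullet> (u - v)) + (norm (u - v))\<^sup>2"
    using inner_add_left[of "x - u" "u - v"] inner_add_right[of _ "x - u" "u - v"]
    unfolding power2_norm_eq_inner by (simp add: inner_commute algebra_simps)
  moreover have "((1/\<beta>) *\<^sub>R (v - u)) \<bullet> (x - u) = - ((x - u) \<bullet> (u - v)) / \<beta>"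
    by (simp add: inner_commute inner_diff_right inner_diff_left)
  ultimately have "r1 + (((1/\<beta>) *\<^sub>R (v - u)) \<bullet> (x - u) - 1/(2*\<beta>) * (norm (x - u))\<^sup>2) \<le> r"
    using beta by (simp add: field_simps)
  then show ?thesis using hu real by simp
qed

lemma quadratic_minorant_fst:
  fixes h :: "'a::real_inner \<Rightarrow> ereal" and z z1 :: "'a \<times> 'b::real_inner"
  assumes minorant: "\<And>x. h x \<ge> h (fst z1) + ereal (a \<bullet> (x - fst z1) - c * (norm (x - fst z1))\<^sup>2)"
    and c: "c \<ge> 0"
  shows "h (fst z) \<ge> h (fst z1) + ereal ((a, 0) \<bullet> (z - z1) - c * (norm (z - z1))\<^sup>2)"
proof -
  have "(norm (fst z - fst z1))\<^sup>2 \<le> (norm (z - z1))\<^sup>2"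
    using norm_fst_le_norm[of "z - z1"] by (simp add: power_mono)
  then have "(a, 0) \<bullet> (z - z1) - c * (norm (z - z1))\<^sup>2 \<le> a \<bullet> (fst z - fst z1) - c * (norm (fst z - fst z1))\<^sup>2"
    using c by (simp add: inner_prod_def mult_left_mono split: prod.splits)
  then have "h (fst z1) + ereal ((a, 0) \<bullet> (z - z1) - c * (norm (z - z1))\<^sup>2)
      \<le> h (fst z1) + ereal (a \<bullet> (fst z - fst z1) - c * (norm (fst z - fst z1))\<^sup>2)"
    by (simp add: add_left_mono)
  also have "\<dots> \<le> h (fst z)" by (rule minorant)
  finally show ?thesis .
qed

section \<open>The strongly convex lower-level problem\<close>

text \<open>Banach's fixed point theorem for \<open>y \<mapsto> y - (\<mu> / L\<^sup>2) F y\<close>, a contraction with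
  constant \<open>sqrt (1 - \<mu>\<^sup>2 / L\<^sup>2)\<close>.\<close>
lemma strongly_monotone_lipschitz_has_zero:
  fixes F :: "'v::{real_inner, complete_space} \<Rightarrow> 'v"
  assumes mu: "0 < \<mu>" "\<mu> \<le> L"
    and mono: "\<And>y y'. (F y - F y') \<bullet> (y - y') \<ge> \<mu> * (norm (y - y'))\<^sup>2"
    and lip: "\<And>y y'. norm (F y - F y') \<le> L * norm (y - y')"
  shows "\<exists>y. F y = 0"
proof -
  define t where "t = \<mu> / L\<^sup>2"
  define c where "c = sqrt (1 - \<mu>\<^sup>2 / L\<^sup>2)"
  have L: "L > 0" using mu by linarith
  have ml: "\<mu>\<^sup>2 / L\<^sup>2 \<le> 1" "\<mu>\<^sup>2 / L\<^sup>2 > 0" using mu L by (simp_all add: power_mono)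
  have c: "0 \<le> c" "c < 1" unfolding c_def using ml by (auto simp: real_sqrt_lt_1_iff)
  have "dist (y - t *\<^sub>R F y) (y' - t *\<^sub>R F y') \<le> c * dist y y'" for y y'
  proof -
    define D where "D = F y - F y'"
    define d where "d = y - y'"
    have m: "D \<bullet> d \<ge> \<mu> * (d \<bullet> d)" using mono[of y y'] by (simp add: D_def d_def power2_norm_eq_inner)
    have "(norm D)\<^sup>2 \<le> (L * norm d)\<^sup>2" using lip[of y y'] by (simp add: D_def d_def power_mono)
    then have l: "D \<bullet> D \<le> L\<^sup>2 * (d \<bullet> d)" by (simp add: power2_norm_eq_inner power_mult_distrib)
    have "(norm (d - t *\<^sub>R D))\<^sup>2 = d \<bullet> d - 2 * t * (D \<bullet> d) + t\<^sup>2 * (D \<bullet> D)"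
      unfolding power2_norm_eq_inner
      by (simp add: inner_diff_left inner_diff_right inner_commute power2_eq_square algebra_simps)
    also have "\<dots> \<le> d \<bullet> d - 2 * t * (\<mu> * (d \<bullet> d)) + t\<^sup>2 * (L\<^sup>2 * (d \<bullet> d))"
      using m l mu L by (intro add_mono diff_mono mult_left_mono) (auto simp: t_def)
    also have "\<dots> = (c * norm d)\<^sup>2"
      using ml L by (simp add: c_def t_def power_mult_distrib power2_eq_square field_simps
          flip: power2_norm_eq_inner)
    finally have "norm (d - t *\<^sub>R D) \<le> c * norm d" using c by (simp add: power2_le_iff_abs_le)
    moreover have "(y - t *\<^sub>R F y) - (y' - t *\<^sub>R F y') = d - t *\<^sub>R D"
      by (simp add: D_def d_def algebra_simps)
    ultimately show ?thesis by (simp only: dist_norm d_def)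
  qed
  then obtain y where "y - t *\<^sub>R F y = y"
    using banach_fix_type[OF c, of "\<lambda>y. y - t *\<^sub>R F y"] by blast
  then show ?thesis using mu L by (auto simp: t_def)
qed

locale lower_level =
  fixes g :: "'a::euclidean_space \<times> 'b::euclidean_space \<Rightarrow> real"
    and \<mu> L \<tau> \<rho> :: real
  assumes mu_pos: "\<mu> > 0" and tau_nonneg: "\<tau> \<ge> 0" and rho_nonneg: "\<rho> \<ge> 0"
    and g_strongly_convex: "\<forall>x. strongly_convex \<mu> (\<lambda>y. g (x, y))"
    and g_differentiable: "\<forall>z. g differentiable (at z)"
    and grad_g_lipschitz: "\<forall>z z'. norm (grad g z - grad g z') \<le> L * dist z z'"
    and grad_y_differentiable_y: "\<forall>x y. (\<lambda>y. grad_y g (x, y)) differentiable (at y)"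
    and grad_y_differentiable_x: "\<forall>x y. (\<lambda>x. grad_y g (x, y)) differentiable (at x)"
    and jac_lipschitz: "\<forall>z z'. onorm (\<lambda>v. jac_xy g z v - jac_xy g z' v) \<le> \<tau> * dist z z'"
    and hess_lipschitz: "\<forall>z z'. onorm (\<lambda>v. hess_yy g z v - hess_yy g z' v) \<le> \<rho> * dist z z'"
begin

abbreviation gy :: "'a \<Rightarrow> 'b \<Rightarrow> 'b" where "gy x y \<equiv> grad_y g (x, y)"

lemma grad_y_lipschitz: "norm (gy x y - gy x' y') \<le> L * dist (x, y) (x', y')"
proof -
  have "norm (gy x y - gy x' y') \<le> norm (grad g (x, y) - grad g (x', y'))"
    using norm_snd_le_norm[of "grad g (x, y) - grad g (x', y')"] by (simp add: grad_y_def)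
  also have "\<dots> \<le> L * dist (x, y) (x', y')" using grad_g_lipschitz by blast
  finally show ?thesis .
qed

lemma grad_y_lipschitz_y: "norm (gy x y - gy x y') \<le> L * norm (y - y')"
  using grad_y_lipschitz[of x y x y'] by (simp add: dist_Pair_Pair dist_norm)

lemma grad_y_lipschitz_x: "norm (gy x y - gy x' y) \<le> L * norm (x - x')"
  using grad_y_lipschitz[of x y x' y] by (simp add: dist_Pair_Pair dist_norm)

lemma has_derivative_g_y: "((\<lambda>y. g (x, y)) has_derivative (\<lambda>k. k \<bullet> gy x y)) (at y)"
  using has_derivative_partial_y g_differentiable by blast

lemmas has_real_derivative_g_line = has_derivative_along_line[OF has_derivative_g_y]

text \<open>Strong convexity along the segment from \<open>y\<close> to \<open>y'\<close>, divided by the step \<open>u\<close>, bounds the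
  difference quotient of \<open>g\<close> at \<open>y\<close>; let \<open>u \<rightarrow> 0\<^sup>+\<close>.\<close>
lemma strongly_convex_first_order:
  "g (x, y') \<ge> g (x, y) + gy x y \<bullet> (y' - y) + \<mu> / 2 * (norm (y' - y))\<^sup>2"
proof -
  define d where "d = y' - y"
  define \<phi> where "\<phi> u = g (x, y + u *\<^sub>R d)" for u
  define B where "B u = \<phi> 1 - \<phi> 0 - \<mu> / 2 * (1 - u) * (norm d)\<^sup>2" for u
  have "(\<phi> has_real_derivative (d \<bullet> gy x y)) (at 0)"
    unfolding \<phi>_def using has_real_derivative_g_line[of x y d 0] by simp
  then have q: "((\<lambda>u. (\<phi> (0 + u) - \<phi> 0) / u) \<longlongrightarrow> d \<bullet> gy x y) (at_right 0)"
    unfolding DERIV_def by (rule tendsto_mono[rotated]) (simp add: at_le)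
  have B: "(B \<longlongrightarrow> B 0) (at_right 0)" unfolding B_def by (intro tendsto_intros)
  have "eventually (\<lambda>u. 0 < u \<and> u < (1::real)) (at_right 0)"
    by (simp add: eventually_at_right_field) (metis zero_less_one)
  then have "eventually (\<lambda>u. (\<phi> (0 + u) - \<phi> 0) / u \<le> B u) (at_right 0)"
  proof eventually_elim
    case (elim u)
    have "g (x, u *\<^sub>R y' + (1 - u) *\<^sub>R y)
        \<le> u * g (x, y') + (1 - u) * g (x, y) - \<mu> / 2 * u * (1 - u) * (norm (y' - y))\<^sup>2"
      using g_strongly_convex elim unfolding strongly_convex_def by auto
    moreover have "u *\<^sub>R y' + (1 - u) *\<^sub>R y = y + u *\<^sub>R d" by (simp add: d_def algebra_simps)
    ultimately have "\<phi> u - \<phi> 0 \<le> u * B u"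
      by (simp add: \<phi>_def B_def d_def algebra_simps)
    then show ?case using elim by (simp add: divide_le_eq mult.commute)
  qed
  then have "d \<bullet> gy x y \<le> B 0" by (rule tendsto_le[OF _ B q, rotated]) simp
  then show ?thesis by (simp add: B_def \<phi>_def d_def inner_commute)
qed

lemma grad_y_strongly_monotone: "(gy x y - gy x y') \<bullet> (y - y') \<ge> \<mu> * (norm (y - y'))\<^sup>2"
  using strongly_convex_first_order[of x y y'] strongly_convex_first_order[of x y' y]
  by (simp add: norm_minus_commute inner_diff_left inner_diff_right)

lemma mu_le_L: "\<mu> \<le> L"
proof -
  obtain e :: 'b where e: "norm e = 1" using norm_Basis SOME_Basis by blast
  have "\<mu> = \<mu> * (norm (e - 0))\<^sup>2" using e by simp
  also have "\<dots> \<le> (gy x e - gy x 0) \<bullet> (e - 0)" by (rule grad_y_strongly_monotone)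
  also have "\<dots> \<le> norm (gy x e - gy x 0) * norm (e - 0)" by (rule norm_cauchy_schwarz)
  also have "\<dots> \<le> L" using grad_y_lipschitz_y[of x e 0] e by simp
  finally show ?thesis .
qed

lemma L_pos: "L > 0" using mu_pos mu_le_L by linarith

lemma descent_lemma: "g (x, y') \<le> g (x, y) + gy x y \<bullet> (y' - y) + L / 2 * (norm (y' - y))\<^sup>2"
proof -
  define d where "d = y' - y"
  define p where "p t = g (x, y + t *\<^sub>R d) - t * (d \<bullet> gy x y) - L / 2 * t\<^sup>2 * (norm d)\<^sup>2" for t
  have "p 1 \<le> p 0"
  proof (rule DERIV_nonpos_imp_nonincreasing[of 0 1 p])
    fix t :: real assume t: "0 \<le> t" "t \<le> 1"
    have D: "DERIV p t :> d \<bullet> gy x (y + t *\<^sub>R d) - d \<bullet> gy x y - L / 2 * (2 * t) * (norm d)\<^sup>2"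
      unfolding p_def by (rule derivative_eq_intros has_real_derivative_g_line refl | simp)+
    have "d \<bullet> (gy x (y + t *\<^sub>R d) - gy x y) \<le> norm d * norm (gy x (y + t *\<^sub>R d) - gy x y)"
      by (rule norm_cauchy_schwarz)
    also have "\<dots> \<le> norm d * (L * norm (t *\<^sub>R d))"
      using grad_y_lipschitz_y[of x "y + t *\<^sub>R d" y] by (intro mult_left_mono) auto
    also have "\<dots> = L * t * (norm d)\<^sup>2" using t by (simp add: power2_eq_square)
    finally have "d \<bullet> gy x (y + t *\<^sub>R d) - d \<bullet> gy x y - L / 2 * (2 * t) * (norm d)\<^sup>2 \<le> 0"
      by (simp add: inner_diff_right)
    then show "\<exists>y. DERIV p t :> y \<and> y \<le> 0" using D by blast
  qed simp
  then show ?thesis by (simp add: p_def d_def inner_commute)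
qed

text \<open>Compare the descent lemma at \<open>y\<close> and the convexity bound at \<open>y0\<close>, both evaluated at the
  gradient step \<open>y - (gy x y - gy x y0) / L\<close>.\<close>
lemma g_lower_bound_cocoercive:
  "g (x, y) \<ge> g (x, y0) + gy x y0 \<bullet> (y - y0) + (norm (gy x y - gy x y0))\<^sup>2 / (2 * L)"
proof -
  define D where "D = gy x y - gy x y0"
  define w where "w = y - (1 / L) *\<^sub>R D"
  have up: "g (x, w) \<le> g (x, y) + gy x y \<bullet> (w - y) + L / 2 * (norm (w - y))\<^sup>2"
    by (rule descent_lemma)
  have low: "g (x, w) \<ge> g (x, y0) + gy x y0 \<bullet> (w - y0) + \<mu> / 2 * (norm (w - y0))\<^sup>2"
    by (rule strongly_convex_first_order)
  have "(norm (w - y))\<^sup>2 = (1 / L)\<^sup>2 * (norm D)\<^sup>2"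
    using L_pos by (simp add: w_def power_mult_distrib power_divide)
  then have "L / 2 * (norm (w - y))\<^sup>2 = (norm D)\<^sup>2 / (2 * L)"
    using L_pos by (simp add: power2_eq_square)
  moreover have "gy x y \<bullet> (w - y) = - (gy x y \<bullet> D) / L" by (simp add: w_def)
  moreover have "gy x y0 \<bullet> (w - y0) = gy x y0 \<bullet> (y - y0) - (gy x y0 \<bullet> D) / L"
    by (simp add: w_def inner_diff_right)
  moreover have "(gy x y \<bullet> D) / L - (gy x y0 \<bullet> D) / L = (norm D)\<^sup>2 / L"
    by (simp add: D_def inner_diff_left diff_divide_distrib[symmetric] power2_norm_eq_inner)
  moreover have "\<mu> / 2 * (norm (w - y0))\<^sup>2 \<ge> 0" using mu_pos by simp
  ultimately show ?thesis using up low unfolding D_def by (simp only:)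
qed

lemma grad_y_cocoercive: "(gy x y - gy x y0) \<bullet> (y - y0) \<ge> (norm (gy x y - gy x y0))\<^sup>2 / L"
  using g_lower_bound_cocoercive[of x y y0] g_lower_bound_cocoercive[of x y0 y] L_pos
  by (simp add: norm_minus_commute inner_diff_left inner_diff_right field_simps)

lemma gradient_step_nonexpansive:
  "norm ((y - (1 / L) *\<^sub>R gy x y) - (y0 - (1 / L) *\<^sub>R gy x y0)) \<le> norm (y - y0)"
proof -
  define D where "D = gy x y - gy x y0"
  define d where "d = y - y0"
  have c: "D \<bullet> d \<ge> (D \<bullet> D) / L"
    using grad_y_cocoercive[of x y y0] by (simp add: D_def d_def power2_norm_eq_inner)
  have "(norm (d - (1 / L) *\<^sub>R D))\<^sup>2 = d \<bullet> d - 2 / L * (D \<bullet> d) + 1 / L * ((D \<bullet> D) / L)"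
    unfolding power2_norm_eq_inner
    by (simp add: inner_diff_left inner_diff_right inner_commute power2_eq_square algebra_simps)
  also have "\<dots> \<le> d \<bullet> d - 1 / L * ((D \<bullet> D) / L)"
    using mult_left_mono[OF c, of "2 / L"] L_pos by simp
  also have "\<dots> \<le> (norm d)\<^sup>2"
    using L_pos by (simp add: power2_norm_eq_inner)
  finally show ?thesis
    by (simp add: D_def d_def algebra_simps power2_le_iff_abs_le)
qed

lemma grad_y_has_zero: "\<exists>y. gy x y = 0"
  using strongly_monotone_lipschitz_has_zero[OF mu_pos mu_le_L grad_y_strongly_monotone grad_y_lipschitz_y] .

lemma ystar_eqI:
  assumes "gy x y0 = 0"
  shows "ystar g x = y0"
  unfolding ystar_def
proof (rule the_equality)
  show "\<forall>y'. g (x, y0) \<le> g (x, y')"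
  proof
    fix y'
    have "0 \<le> \<mu> / 2 * (norm (y' - y0))\<^sup>2" using mu_pos by simp
    then show "g (x, y0) \<le> g (x, y')" using strongly_convex_first_order[of x y0 y'] assms by simp
  qed
  fix y1 assume "\<forall>y'. g (x, y1) \<le> g (x, y')"
  then have "g (x, y1) \<le> g (x, y0)" by blast
  then have "\<mu> / 2 * (norm (y1 - y0))\<^sup>2 \<le> 0"
    using strongly_convex_first_order[of x y0 y1] assms by simp
  then show "y1 = y0" using mu_pos by (simp add: mult_le_0_iff)
qed

lemma grad_y_ystar: "gy x (ystar g x) = 0"
  using grad_y_has_zero ystar_eqI by metis

definition kappa :: real where "kappa = L / \<mu>"

lemma kappa_ge_1: "kappa \<ge> 1" using mu_le_L mu_pos by (simp add: kappa_def)

lemma ystar_lipschitz: "norm (ystar g x - ystar g x') \<le> kappa * norm (x - x')"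
proof -
  define a where "a = ystar g x"
  define b where "b = ystar g x'"
  have "\<mu> * (norm (a - b))\<^sup>2 \<le> (gy x a - gy x b) \<bullet> (a - b)" by (rule grad_y_strongly_monotone)
  also have "gy x a - gy x b = gy x' b - gy x b" using grad_y_ystar a_def b_def by simp
  also have "(gy x' b - gy x b) \<bullet> (a - b) \<le> norm (gy x' b - gy x b) * norm (a - b)"
    by (rule norm_cauchy_schwarz)
  also have "\<dots> \<le> L * norm (x - x') * norm (a - b)"
    using grad_y_lipschitz_x[of x' b x] by (intro mult_right_mono) (auto simp: norm_minus_commute)
  finally have "\<mu> * norm (a - b) * norm (a - b) \<le> L * norm (x - x') * norm (a - b)"
    by (simp add: power2_eq_square mult.assoc)
  then have "\<mu> * norm (a - b) \<le> L * norm (x - x')"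
    using L_pos by (cases "norm (a - b) = 0") (auto simp: zero_le_mult_iff)
  then show ?thesis using mu_pos by (simp add: kappa_def a_def b_def field_simps)
qed

lemma inner_loop_Suc:
  "fst (inner_loop G a e x y' (Suc t))
     = snd (inner_loop G a e x y' t) - a *\<^sub>R grad_y G (x, snd (inner_loop G a e x y' t))"
  "snd (inner_loop G a e x y' (Suc t))
     = fst (inner_loop G a e x y' (Suc t))
       + e *\<^sub>R (fst (inner_loop G a e x y' (Suc t)) - fst (inner_loop G a e x y' t))"
  by (simp_all add: Let_def split_def)

text \<open>Two runs of the inner loop, from \<open>(x, y')\<close> and \<open>(xx, yy)\<close>, drift apart by at most the factor
  \<open>5/2\<close> per iteration: the recursion of the next two lemmas has growth rate \<open>1 + sqrt 2\<close>.\<close>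
lemma inner_loop_fst_dist_Suc:
  "norm (fst (inner_loop g (1/L) \<eta> x y' (Suc t)) - fst (inner_loop g (1/L) \<eta> xx yy (Suc t)))
     \<le> norm (snd (inner_loop g (1/L) \<eta> x y' t) - snd (inner_loop g (1/L) \<eta> xx yy t)) + norm (x - xx)"
proof -
  define Y where "Y = snd (inner_loop g (1/L) \<eta> x y' t)"
  define Y2 where "Y2 = snd (inner_loop g (1/L) \<eta> xx yy t)"
  have "fst (inner_loop g (1/L) \<eta> x y' (Suc t)) - fst (inner_loop g (1/L) \<eta> xx yy (Suc t))
      = ((Y - (1/L) *\<^sub>R gy x Y) - (Y2 - (1/L) *\<^sub>R gy x Y2)) + (1/L) *\<^sub>R (gy xx Y2 - gy x Y2)"
    unfolding Y_def Y2_def inner_loop_Suc by (simp add: algebra_simps)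
  also have "norm \<dots> \<le> norm (Y - Y2) + (1/L) * norm (gy xx Y2 - gy x Y2)"
    using gradient_step_nonexpansive[of Y x Y2] L_pos
    by (intro order_trans[OF norm_triangle_ineq] add_mono) auto
  also have "(1/L) * norm (gy xx Y2 - gy x Y2) \<le> (1/L) * (L * norm (x - xx))"
    using grad_y_lipschitz_x[of xx Y2 x] L_pos by (intro mult_left_mono) (auto simp: norm_minus_commute)
  also have "\<dots> = norm (x - xx)" using L_pos by simp
  finally show ?thesis by (simp add: Y_def Y2_def)
qed

lemma inner_loop_snd_dist_Suc:
  assumes "0 \<le> \<eta>" "\<eta> \<le> 1"
  shows "norm (snd (inner_loop g (1/L) \<eta> x y' (Suc t)) - snd (inner_loop g (1/L) \<eta> xx yy (Suc t)))
     \<le> 2 * norm (fst (inner_loop g (1/L) \<eta> x y' (Suc t)) - fst (inner_loop g (1/L) \<eta> xx yy (Suc t)))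
       + norm (fst (inner_loop g (1/L) \<eta> x y' t) - fst (inner_loop g (1/L) \<eta> xx yy t))"
    (is "norm ?Y \<le> 2 * norm ?U' + norm ?U")
proof -
  have "?Y = (1 + \<eta>) *\<^sub>R ?U' - \<eta> *\<^sub>R ?U"
    by (subst (1 2) inner_loop_Suc(2)) (simp add: algebra_simps)
  also have "norm \<dots> \<le> (1 + \<eta>) * norm ?U' + \<eta> * norm ?U"
    using assms by (intro order_trans[OF norm_triangle_ineq4]) simp
  also have "\<dots> \<le> 2 * norm ?U' + norm ?U"
    using assms by (intro add_mono mult_right_mono) (auto intro: mult_left_le_one_le)
  finally show ?thesis .
qed

lemma inner_loop_dist:
  fixes x xx :: 'a and y' yy :: 'b
  assumes "0 \<le> \<eta>" "\<eta> \<le> 1"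
  defines "K \<equiv> 6/5 * norm (y' - yy) + 3/2 * norm (x - xx)"
  shows "norm (fst (inner_loop g (1/L) \<eta> x y' (Suc t)) - fst (inner_loop g (1/L) \<eta> xx yy (Suc t)))
           + norm (x - xx) / 2 \<le> (5/2) ^ t * K
     \<and> norm (snd (inner_loop g (1/L) \<eta> x y' (Suc t)) - snd (inner_loop g (1/L) \<eta> xx yy (Suc t)))
           + 3/2 * norm (x - xx) \<le> (5/2) ^ Suc t * K"
proof (induction t)
  case 0
  then show ?case
    using inner_loop_fst_dist_Suc[of \<eta> x y' 0 xx yy] inner_loop_snd_dist_Suc[OF assms(1,2), of x y' 0 xx yy]
    by (simp add: K_def del: inner_loop.simps(2)) (use norm_ge_zero[of "x - xx"] norm_ge_zero[of "y' - yy"] in linarith)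
next
  case (Suc t)
  have "(5/2::real) ^ t * K \<ge> 0" by (simp add: K_def)
  then show ?case
    using Suc inner_loop_fst_dist_Suc[of \<eta> x y' "Suc t" xx yy]
      inner_loop_snd_dist_Suc[OF assms(1,2), of x y' "Suc t" xx yy]
    by simp
qed

lemma yT_lipschitz:
  assumes "0 \<le> \<eta>" "\<eta> \<le> 1"
  shows "norm (yT g (1/L) \<eta> T x y' - yT g (1/L) \<eta> T xx yy)
           \<le> (5/2) ^ T * (6/5 * norm (y' - yy) + 3/2 * norm (x - xx))"
proof (cases T)
  case 0
  then show ?thesis by (simp add: yT_def) (use norm_ge_zero[of "x - xx"] norm_ge_zero[of "y' - yy"] in linarith)
next
  case (Suc t)
  have "norm (yT g (1/L) \<eta> T x y' - yT g (1/L) \<eta> T xx yy) + 3/2 * norm (x - xx)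
      \<le> (5/2) ^ T * (6/5 * norm (y' - yy) + 3/2 * norm (x - xx))"
    unfolding yT_def Suc using inner_loop_dist[OF assms, where x=x and y'=y' and xx=xx and yy=yy and t=t]
    by blast
  then show ?thesis using norm_ge_zero[of "x - xx"] by linarith
qed

definition dx_grad_y :: "'a \<Rightarrow> 'b \<Rightarrow> 'a \<Rightarrow> 'b" where
  "dx_grad_y x y = frechet_derivative (\<lambda>x. gy x y) (at x)"

abbreviation hess :: "'a \<Rightarrow> 'b \<Rightarrow> 'b \<Rightarrow> 'b" where "hess x y \<equiv> hess_yy g (x, y)"

abbreviation jac :: "'a \<Rightarrow> 'b \<Rightarrow> 'b \<Rightarrow> 'a" where "jac x y \<equiv> jac_xy g (x, y)"

lemma has_derivative_grad_y_y: "(gy x has_derivative hess x y) (at y)"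
  using grad_y_differentiable_y frechet_derivative_works unfolding hess_yy_def by auto

lemma has_derivative_grad_y_x: "((\<lambda>x. gy x y) has_derivative dx_grad_y x y) (at x)"
  using grad_y_differentiable_x frechet_derivative_works unfolding dx_grad_y_def by auto

lemma bounded_linear_hess: "bounded_linear (hess x y)"
  using has_derivative_grad_y_y has_derivative_bounded_linear by blast

lemma linear_hess: "linear (hess x y)"
  using bounded_linear_hess bounded_linear.linear by blast

lemma bounded_linear_dx_grad_y: "bounded_linear (dx_grad_y x y)"
  using has_derivative_grad_y_x has_derivative_bounded_linear by blast

lemma linear_dx_grad_y: "linear (dx_grad_y x y)"
  using bounded_linear_dx_grad_y bounded_linear.linear by blast

lemma jac_eq_adjoint: "jac x y = adjoint (dx_grad_y x y)"
  by (simp add: jac_xy_def dx_grad_y_def)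

lemma linear_jac: "linear (jac x y)"
  unfolding jac_eq_adjoint by (rule adjoint_linear[OF linear_dx_grad_y])

lemma inner_jac: "h \<bullet> jac x y w = dx_grad_y x y h \<bullet> w"
  unfolding jac_eq_adjoint using adjoint_works[OF linear_dx_grad_y] .

lemma norm_jac_le: "norm (jac x y w) \<le> L * norm w"
proof -
  have "norm (dx_grad_y x y v) \<le> L * norm v" for v
    by (rule has_derivative_norm_le_lipschitz[OF has_derivative_grad_y_x]) (rule grad_y_lipschitz_x)
  then show ?thesis unfolding jac_eq_adjoint using linear_dx_grad_y L_pos by (intro norm_adjoint_le) auto
qed

lemma hess_strongly_positive: "hess x y v \<bullet> v \<ge> \<mu> * (norm v)\<^sup>2"
  by (rule has_derivative_strongly_monotone[OF has_derivative_grad_y_y]) (rule grad_y_strongly_monotone)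

lemma norm_hess_diff_le: "norm (hess x y w - hess x' y' w) \<le> \<rho> * dist (x, y) (x', y') * norm w"
proof -
  have "bounded_linear (\<lambda>v. hess x y v - hess x' y' v)"
    using bounded_linear_hess by (intro bounded_linear_sub)
  from onorm[OF this] have "norm (hess x y w - hess x' y' w) \<le> onorm (\<lambda>v. hess x y v - hess x' y' v) * norm w"
    by simp
  also have "\<dots> \<le> \<rho> * dist (x, y) (x', y') * norm w" using hess_lipschitz by (intro mult_right_mono) auto
  finally show ?thesis .
qed

lemma norm_jac_diff_le: "norm (jac x y w - jac x' y' w) \<le> \<tau> * dist (x, y) (x', y') * norm w"
proof -
  have "bounded_linear (\<lambda>v. jac x y v - jac x' y' v)"
    using linear_jac by (intro bounded_linear_sub) (simp_all add: linear_conv_bounded_linear)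
  from onorm[OF this] have "norm (jac x y w - jac x' y' w) \<le> onorm (\<lambda>v. jac x y v - jac x' y' v) * norm w"
    by simp
  also have "\<dots> \<le> \<tau> * dist (x, y) (x', y') * norm w" using jac_lipschitz by (intro mult_right_mono) auto
  finally show ?thesis .
qed

lemma hess_symmetric: "u \<bullet> hess x y v = v \<bullet> hess x y u"
proof (rule hessian_symmetric[where F="\<lambda>y. g (x, y)" and Gr="gy x" and R=\<rho>])
  show "onorm (\<lambda>v. hess x y v - hess x y' v) \<le> \<rho> * norm (y - y')" for y y'
    using hess_lipschitz[rule_format, of "(x, y)" "(x, y')"] by (simp add: dist_Pair_Pair dist_norm)
qed (use has_derivative_g_y has_derivative_grad_y_y rho_nonneg linear_hess in auto)

lemma bij_hess: "bij (hess x y)"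
proof -
  have "inj (hess x y)"
  proof (rule linear_injective_0[OF linear_hess, THEN iffD2], intro allI impI)
    fix v assume "hess x y v = 0"
    then have "\<mu> * (norm v)\<^sup>2 \<le> 0" using hess_strongly_positive[of v x y] by simp
    then show "v = 0" using mu_pos by (simp add: mult_le_0_iff)
  qed
  then show ?thesis using linear_injective_imp_surjective[OF linear_hess] by (simp add: bij_def)
qed

definition hess_inv :: "'a \<Rightarrow> 'b \<Rightarrow> 'b \<Rightarrow> 'b" where "hess_inv x y = inv (hess x y)"

lemma hess_hess_inv [simp]: "hess x y (hess_inv x y w) = w"
  unfolding hess_inv_def using bij_hess bij_inv_eq_iff by metis

lemma hess_inv_hess [simp]: "hess_inv x y (hess x y v) = v"
  unfolding hess_inv_def using bij_hess bij_is_inj inv_f_f by metis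

lemma norm_hess_inv_le: "norm (hess_inv x y w) \<le> norm w / \<mu>"
proof -
  define a where "a = hess_inv x y w"
  have "\<mu> * (norm a)\<^sup>2 \<le> hess x y a \<bullet> a" by (rule hess_strongly_positive)
  also have "\<dots> \<le> norm w * norm a" by (simp add: a_def norm_cauchy_schwarz)
  finally have "\<mu> * norm a * norm a \<le> norm w * norm a" by (simp add: power2_eq_square mult.assoc)
  then have "\<mu> * norm a \<le> norm w" by (cases "norm a = 0") auto
  then show ?thesis using mu_pos by (simp add: a_def field_simps)
qed

lemma linear_hess_inv: "linear (hess_inv x y)"
proof (rule linearI)
  show "hess_inv x y (a + b) = hess_inv x y a + hess_inv x y b" for a b
    by (metis hess_inv_hess hess_hess_inv linear_add[OF linear_hess])
  show "hess_inv x y (c *\<^sub>R a) = c *\<^sub>R hess_inv x y a" for c a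
    by (metis hess_inv_hess hess_hess_inv linear_cmul[OF linear_hess])
qed

lemma bounded_linear_hess_inv: "bounded_linear (hess_inv x y)"
proof -
  interpret linear "hess_inv x y" by (rule linear_hess_inv)
  show ?thesis
    by unfold_locales (use norm_hess_inv_le in \<open>auto intro!: exI[of _ "1 / \<mu>"] simp: field_simps\<close>)
qed

lemma hess_inv_symmetric: "a \<bullet> hess_inv x y b = hess_inv x y a \<bullet> b"
  by (metis hess_hess_inv hess_symmetric inner_commute)

lemma norm_hess_inv_diff_le:
  "norm (hess_inv x y b - hess_inv x' y' b) \<le> \<rho> * dist (x, y) (x', y') * norm b / \<mu>\<^sup>2"
proof -
  define c where "c = hess_inv x' y' b"
  have "hess_inv x y b - c = hess_inv x y (hess x' y' c - hess x y c)"
    by (simp add: c_def linear_diff[OF linear_hess_inv])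
  then have "norm (hess_inv x y b - c) \<le> norm (hess x' y' c - hess x y c) / \<mu>"
    by (simp only: norm_hess_inv_le)
  also have "\<dots> \<le> \<rho> * dist (x, y) (x', y') * norm c / \<mu>"
    using norm_hess_diff_le[of x' y' c x y] mu_pos by (simp add: dist_commute divide_right_mono)
  also have "\<dots> \<le> \<rho> * dist (x, y) (x', y') * (norm b / \<mu>) / \<mu>"
    using norm_hess_inv_le[of x' y' b] rho_nonneg mu_pos
    by (intro divide_right_mono mult_left_mono) (auto simp: c_def)
  finally show ?thesis by (simp add: c_def power2_eq_square)
qed

lemma has_derivative_grad_y_joint:
  "((\<lambda>z. gy (fst z) (snd z)) has_derivative (\<lambda>t. dx_grad_y x y (fst t) + hess x y (snd t))) (at (x, y))"
proof -
  have "\<rho>-lipschitz_on UNIV (\<lambda>(x, y). Blinfun (hess x y))"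
  proof (rule lipschitz_onI)
    fix z z' :: "'a \<times> 'b"
    obtain x y x' y' where "z = (x, y)" "z' = (x', y')" by fastforce
    then show "dist ((\<lambda>(x, y). Blinfun (hess x y)) z) ((\<lambda>(x, y). Blinfun (hess x y)) z') \<le> \<rho> * dist z z'"
      using hess_lipschitz[rule_format, of z z']
      by (simp add: norm_blinfun.rep_eq dist_norm minus_blinfun.rep_eq fun_diff_def
          bounded_linear_Blinfun_apply[OF bounded_linear_hess])
  qed (rule rho_nonneg)
  then have "isCont (\<lambda>(x, y). Blinfun (hess x y)) (x, y)"
    using lipschitz_on_continuous_on continuous_on_eq_continuous_at by blast
  then have "((\<lambda>(x, y). gy x y) has_derivative (\<lambda>(tx, ty). dx_grad_y x y tx + blinfun_apply (Blinfun (hess x y)) ty))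
      (at (x, y) within UNIV \<times> UNIV)"
    using has_derivative_grad_y_x has_derivative_grad_y_y
    by (intro has_derivative_partialsI[where fy="\<lambda>x y. Blinfun (hess x y)"])
      (auto simp: bounded_linear_Blinfun_apply[OF bounded_linear_hess] continuous_at_imp_continuous_within)
  then show ?thesis by (simp add: bounded_linear_Blinfun_apply[OF bounded_linear_hess] split_def)
qed

lemma grad_y_differentiable_joint: "(\<lambda>z. gy (fst z) (snd z)) differentiable (at z)"
  using has_derivative_grad_y_joint[of "fst z" "snd z"] unfolding differentiable_def by auto

text \<open>Implicit differentiation of \<open>gy x (ystar g x) = 0\<close>: the error of the candidate linearization of
  \<open>ystar g\<close> is the image under \<open>hess_inv\<close> of the linearization error of \<open>gy\<close>.\<close>
lemma ystar_linearization_error: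
  fixes x x0 :: 'a
  defines "y0 \<equiv> ystar g x0"
  shows "norm (ystar g x - y0 + hess_inv x0 y0 (dx_grad_y x0 y0 (x - x0)))
     \<le> norm (gy x (ystar g x) - gy x0 y0 - (dx_grad_y x0 y0 (x - x0) + hess x0 y0 (ystar g x - y0))) / \<mu>"
proof -
  define w where "w = hess x0 y0 (ystar g x - y0) + dx_grad_y x0 y0 (x - x0)"
  have "ystar g x - y0 + hess_inv x0 y0 (dx_grad_y x0 y0 (x - x0)) = hess_inv x0 y0 w"
    by (simp add: w_def linear_add[OF linear_hess_inv])
  moreover have "gy x (ystar g x) - gy x0 y0 - (dx_grad_y x0 y0 (x - x0) + hess x0 y0 (ystar g x - y0)) = - w"
    by (simp add: w_def y0_def grad_y_ystar)
  ultimately show ?thesis by (simp add: norm_hess_inv_le)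
qed

lemma has_derivative_ystar:
  "(ystar g has_derivative (\<lambda>h. - hess_inv x0 (ystar g x0) (dx_grad_y x0 (ystar g x0) h))) (at x0)"
proof -
  define y0 where "y0 = ystar g x0"
  define D where "D h = - hess_inv x0 y0 (dx_grad_y x0 y0 h)" for h
  have "bounded_linear D"
    unfolding D_def using bounded_linear_compose[OF bounded_linear_hess_inv bounded_linear_dx_grad_y]
    by (intro bounded_linear_minus) (simp add: o_def)
  moreover have "\<exists>d>0. \<forall>x. norm (x - x0) < d \<longrightarrow> norm (ystar g x - ystar g x0 - D (x - x0)) \<le> e * norm (x - x0)"
    if e: "e > 0" for e
  proof -
    define e1 where "e1 = e * \<mu> / (1 + kappa)"
    have e1: "e1 > 0" using e mu_pos kappa_ge_1 by (simp add: e1_def)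
    obtain d where d: "d > 0" and dd: "\<And>z. norm (z - (x0, y0)) < d \<Longrightarrow>
        norm (gy (fst z) (snd z) - gy x0 y0 - (dx_grad_y x0 y0 (fst (z - (x0, y0))) + hess x0 y0 (snd (z - (x0, y0)))))
          \<le> e1 * norm (z - (x0, y0))"
      using has_derivative_grad_y_joint[of x0 y0] e1 unfolding has_derivative_at_alt by force
    show ?thesis
    proof (intro exI[of _ "d / (1 + kappa)"] conjI allI impI)
      show "d / (1 + kappa) > 0" using d kappa_ge_1 by simp
      fix x assume x: "norm (x - x0) < d / (1 + kappa)"
      have "norm ((x, ystar g x) - (x0, y0)) \<le> norm (x - x0) + norm (ystar g x - y0)"
        using norm_Pair_le by simp
      also have "\<dots> \<le> (1 + kappa) * norm (x - x0)"
        using ystar_lipschitz[of x x0] by (simp add: y0_def algebra_simps)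
      finally have nz: "norm ((x, ystar g x) - (x0, y0)) \<le> (1 + kappa) * norm (x - x0)" .
      then have "norm ((x, ystar g x) - (x0, y0)) < d" using x kappa_ge_1 by (simp add: field_simps)
      then have "norm (gy x (ystar g x) - gy x0 y0 - (dx_grad_y x0 y0 (x - x0) + hess x0 y0 (ystar g x - y0)))
          \<le> e1 * ((1 + kappa) * norm (x - x0))"
        using dd[of "(x, ystar g x)"] nz e1 by (auto intro: order_trans mult_left_mono)
      then have "norm (ystar g x - y0 + hess_inv x0 y0 (dx_grad_y x0 y0 (x - x0))) \<le> e1 * ((1 + kappa) * norm (x - x0)) / \<mu>"
        using ystar_linearization_error[of x x0] mu_pos unfolding y0_def
        by (meson divide_right_mono less_imp_le order_trans)
      also have "\<dots> = e * norm (x - x0)" using mu_pos kappa_ge_1 by (simp add: e1_def)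
      finally show "norm (ystar g x - ystar g x0 - D (x - x0)) \<le> e * norm (x - x0)"
        by (simp add: D_def y0_def)
    qed
  qed
  ultimately show ?thesis unfolding has_derivative_at_alt D_def y0_def by blast
qed

lemma inner_loop_differentiable: "(\<lambda>z. inner_loop g a e (fst z) (snd z) t) differentiable (at z0)"
proof (induction t)
  case 0
  show ?case by (simp add: bounded_linear_imp_differentiable[OF bounded_linear_snd])
next
  case (Suc t)
  define p where "p z = inner_loop g a e (fst z) (snd z) t" for z
  define U where "U z = snd (p z) - a *\<^sub>R gy (fst z) (snd (p z))" for z
  have eq: "(\<lambda>z. inner_loop g a e (fst z) (snd z) (Suc t)) = (\<lambda>z. (U z, U z + e *\<^sub>R (U z - fst (p z))))"
    by (rule ext, rule prod_eqI) (simp_all add: inner_loop_Suc U_def p_def del: inner_loop.simps)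
  have p: "p differentiable (at z0)" using Suc by (simp add: p_def[abs_def])
  have "(\<lambda>z. (fst z, snd (p z))) differentiable (at z0)"
    by (intro differentiable_Pair differentiable_snd_comp[OF p])
      (simp add: bounded_linear_imp_differentiable[OF bounded_linear_fst])
  from differentiable_compose[OF grad_y_differentiable_joint this]
  have "U differentiable (at z0)"
    unfolding U_def[abs_def] by (intro differentiable_diff differentiable_scaleR differentiable_snd_comp[OF p]
        differentiable_const) (simp add: o_def)
  then show ?case unfolding eq
    by (intro differentiable_Pair differentiable_add differentiable_scaleR differentiable_diff
        differentiable_const differentiable_fst_comp[OF p])
qed

definition inner_error :: "real \<Rightarrow> nat \<Rightarrow> 'a \<times> 'b \<Rightarrow> 'b" where
  "inner_error \<eta> T z = yT g (1/L) \<eta> T (fst z) (snd z) - ystar g (fst z)"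

definition inner_error_lip :: "nat \<Rightarrow> real" where
  "inner_error_lip T = 27/10 * (5/2) ^ T + kappa"

lemma inner_error_lip_nonneg: "inner_error_lip T \<ge> 0"
  using kappa_ge_1 by (simp add: inner_error_lip_def)

lemma inner_error_differentiable: "inner_error \<eta> T differentiable (at z)"
proof -
  have "(\<lambda>z. yT g (1/L) \<eta> T (fst z) (snd z)) differentiable (at z)"
    unfolding yT_def by (rule differentiable_snd_comp[OF inner_loop_differentiable])
  moreover have "ystar g differentiable (at (fst z))" using has_derivative_ystar differentiable_def by blast
  then have "(\<lambda>z. ystar g (fst z)) differentiable (at z)"
    using differentiable_compose[of "ystar g" fst z UNIV] bounded_linear_imp_differentiable[OF bounded_linear_fst]
    by auto
  ultimately show ?thesis unfolding inner_error_def[abs_def] by (rule differentiable_diff)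
qed

lemma inner_error_lipschitz:
  assumes "0 \<le> \<eta>" "\<eta> \<le> 1"
  shows "norm (inner_error \<eta> T z - inner_error \<eta> T z') \<le> inner_error_lip T * norm (z - z')"
proof -
  obtain x y x' y' where z: "z = (x, y)" "z' = (x', y')" by fastforce
  have nx: "norm (x - x') \<le> norm (z - z')" and ny: "norm (y - y') \<le> norm (z - z')"
    using norm_fst_le_norm[of "z - z'"] norm_snd_le_norm[of "z - z'"] by (simp_all add: z)
  have "inner_error \<eta> T z - inner_error \<eta> T z'
      = (yT g (1/L) \<eta> T x y - yT g (1/L) \<eta> T x' y') - (ystar g x - ystar g x')"
    by (simp add: inner_error_def z)
  then have "norm (inner_error \<eta> T z - inner_error \<eta> T z')
      \<le> norm (yT g (1/L) \<eta> T x y - yT g (1/L) \<eta> T x' y') + norm (ystar g x - ystar g x')"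
    by (metis norm_triangle_ineq4)
  also have "\<dots> \<le> (5/2) ^ T * (6/5 * norm (y - y') + 3/2 * norm (x - x')) + kappa * norm (x - x')"
    by (intro add_mono yT_lipschitz[OF assms] ystar_lipschitz)
  also have "\<dots> \<le> (5/2) ^ T * (6/5 * norm (z - z') + 3/2 * norm (z - z')) + kappa * norm (z - z')"
    using nx ny kappa_ge_1 by (intro add_mono mult_left_mono) auto
  also have "\<dots> = inner_error_lip T * norm (z - z')" by (simp add: inner_error_lip_def algebra_simps)
  finally show ?thesis .
qed

lemma has_derivative_sq_norm_inner_error:
  assumes "0 \<le> \<eta>" "\<eta> \<le> 1"
  obtains q where "((\<lambda>z. (norm (inner_error \<eta> T z))\<^sup>2) has_derivative (\<lambda>w. w \<bullet> q)) (at z0)"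
    and "norm q \<le> 2 * inner_error_lip T * norm (inner_error \<eta> T z0)"
proof -
  obtain D where D: "(inner_error \<eta> T has_derivative D) (at z0)"
    using inner_error_differentiable differentiable_def by blast
  have lin: "linear D" using D has_derivative_linear by blast
  define q where "q = 2 *\<^sub>R adjoint D (inner_error \<eta> T z0)"
  have "((\<lambda>z. inner_error \<eta> T z \<bullet> inner_error \<eta> T z) has_derivative
      (\<lambda>h. inner_error \<eta> T z0 \<bullet> D h + D h \<bullet> inner_error \<eta> T z0)) (at z0)"
    using has_derivative_inner[OF D D] .
  moreover have "(\<lambda>h. inner_error \<eta> T z0 \<bullet> D h + D h \<bullet> inner_error \<eta> T z0) = (\<lambda>w. w \<bullet> q)"
    by (rule ext) (simp add: q_def adjoint_works[OF lin] inner_commute)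
  ultimately have "((\<lambda>z. (norm (inner_error \<eta> T z))\<^sup>2) has_derivative (\<lambda>w. w \<bullet> q)) (at z0)"
    by (simp add: power2_norm_eq_inner)
  moreover have "norm (D v) \<le> inner_error_lip T * norm v" for v
    by (rule has_derivative_norm_le_lipschitz[OF D inner_error_lipschitz[OF assms]])
  then have "norm q \<le> 2 * inner_error_lip T * norm (inner_error \<eta> T z0)"
    unfolding q_def using norm_adjoint_le[OF lin _ inner_error_lip_nonneg] by (simp add: mult.assoc)
  ultimately show ?thesis by (rule that)
qed

end

section \<open>The upper-level problem and the potential\<close>

locale bilevel = lower_level g \<mu> L \<tau> \<rho>
  for g :: "'a::euclidean_space \<times> 'b::euclidean_space \<Rightarrow> real" and \<mu> L \<tau> \<rho> +
  fixes f :: "'a \<times> 'b \<Rightarrow> real" and M :: real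
  assumes M_nonneg: "M \<ge> 0"
    and f_differentiable: "\<forall>z. f differentiable (at z)"
    and f_lipschitz: "\<forall>z z'. \<bar>f z - f z'\<bar> \<le> M * dist z z'"
    and grad_f_lipschitz: "\<forall>z z'. norm (grad f z - grad f z') \<le> L * dist z z'"
begin

text \<open>The hypergradient \<open>\<nabla>\<^sub>x f - \<nabla>\<^sub>x\<nabla>\<^sub>y g (\<nabla>\<^sub>y\<^sup>2 g)\<^sup>-\<^sup>1 \<nabla>\<^sub>y f\<close>, evaluated at an arbitrary \<open>y\<close>: at
  \<open>y = ystar g x\<close> it is the gradient of \<open>Phi f g\<close>, and at the inner-loop output it is the
  direction \<open>\<nabla>\<Phi>(x\<^sub>k)\<close> used by the algorithm.\<close>
definition hypergrad :: "'a \<Rightarrow> 'b \<Rightarrow> 'a" where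
  "hypergrad x y = grad_x f (x, y) - jac x y (hess_inv x y (grad_y f (x, y)))"

definition hypergrad_lip :: real where
  "hypergrad_lip = L + \<tau> * M / \<mu> + L * \<rho> * M / \<mu>\<^sup>2 + L\<^sup>2 / \<mu>"

lemma has_derivative_f: "(f has_derivative (\<lambda>k. k \<bullet> grad f z)) (at z)"
  using has_derivative_grad f_differentiable by blast

lemma has_derivative_Phi: "(Phi f g has_derivative (\<lambda>h. h \<bullet> hypergrad x (ystar g x))) (at x)"
proof -
  define y where "y = ystar g x"
  have "((\<lambda>x. (x, ystar g x)) has_derivative (\<lambda>h. (h, - hess_inv x y (dx_grad_y x y h)))) (at x)"
    unfolding y_def by (intro has_derivative_Pair has_derivative_ident has_derivative_ystar)
  from has_derivative_compose[OF this has_derivative_f]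
  have "((\<lambda>x. f (x, ystar g x)) has_derivative
      (\<lambda>h. (h, - hess_inv x y (dx_grad_y x y h)) \<bullet> grad f (x, y))) (at x)"
    by (simp add: y_def)
  moreover have "(h, - hess_inv x y (dx_grad_y x y h)) \<bullet> grad f (x, y) = h \<bullet> hypergrad x y" for h
  proof -
    have "(h, - hess_inv x y (dx_grad_y x y h)) \<bullet> grad f (x, y)
        = h \<bullet> grad_x f (x, y) - hess_inv x y (dx_grad_y x y h) \<bullet> grad_y f (x, y)"
      by (simp add: grad_x_def grad_y_def inner_prod_def split: prod.splits)
    also have "hess_inv x y (dx_grad_y x y h) \<bullet> grad_y f (x, y)
        = h \<bullet> jac x y (hess_inv x y (grad_y f (x, y)))"
      by (simp add: hess_inv_symmetric inner_jac)
    finally show ?thesis by (simp add: hypergrad_def inner_diff_right)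
  qed
  ultimately show ?thesis by (simp add: Phi_def[abs_def] y_def)
qed

lemma norm_grad_f_le: "norm (grad f z) \<le> M"
proof -
  have "norm (grad f z \<bullet> grad f z) \<le> M * norm (grad f z)"
  proof (rule has_derivative_norm_le_lipschitz[OF has_derivative_f])
    show "norm (f a - f b) \<le> M * norm (a - b)" for a b
      using f_lipschitz[rule_format, of a b] by (simp add: dist_norm)
  qed
  then have "norm (grad f z) * norm (grad f z) \<le> M * norm (grad f z)"
    by (simp add: power2_eq_square[symmetric] power2_norm_eq_inner[symmetric])
  then show ?thesis using M_nonneg by (cases "norm (grad f z) = 0") auto
qed

lemma norm_grad_y_f_le: "norm (grad_y f z) \<le> M"
  using norm_grad_f_le[of z] norm_snd_le_norm[of "grad f z"] by (simp add: grad_y_def)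

lemma grad_x_f_lipschitz: "norm (grad_x f z - grad_x f z') \<le> L * dist z z'"
  using grad_f_lipschitz[rule_format, of z z'] norm_fst_le_norm[of "grad f z - grad f z'"]
  by (simp add: grad_x_def)

lemma grad_y_f_lipschitz: "norm (grad_y f z - grad_y f z') \<le> L * dist z z'"
  using grad_f_lipschitz[rule_format, of z z'] norm_snd_le_norm[of "grad f z - grad f z'"]
  by (simp add: grad_y_def)

lemma norm_hess_inv_grad_y_f_le: "norm (hess_inv x y (grad_y f (x, y))) \<le> M / \<mu>"
  using norm_hess_inv_le order_trans divide_right_mono[OF norm_grad_y_f_le] mu_pos
  by (metis less_eq_real_def)

lemma hypergrad_lipschitz: "norm (hypergrad x y - hypergrad x' y') \<le> hypergrad_lip * dist (x, y) (x', y')"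
proof -
  define r where "r = dist (x, y) (x', y')"
  define b where "b = grad_y f (x, y)"
  define b' where "b' = grad_y f (x', y')"
  have r: "r \<ge> 0" by (simp add: r_def)
  have "norm ((jac x y - jac x' y') (hess_inv x y b)) \<le> \<tau> * r * norm (hess_inv x y b)"
    using norm_jac_diff_le by (simp add: r_def)
  also have "\<dots> \<le> \<tau> * r * (M / \<mu>)"
    using norm_hess_inv_grad_y_f_le tau_nonneg r by (intro mult_left_mono) (auto simp: b_def)
  finally have t1: "norm ((jac x y - jac x' y') (hess_inv x y b)) \<le> \<tau> * r * (M / \<mu>)" .
  have "norm (jac x' y' (hess_inv x y b - hess_inv x' y' b))
      \<le> L * norm (hess_inv x y b - hess_inv x' y' b)" by (rule norm_jac_le)
  also have "\<dots> \<le> L * (\<rho> * r * norm b / \<mu>\<^sup>2)"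
    unfolding r_def using L_pos by (intro mult_left_mono norm_hess_inv_diff_le) auto
  also have "\<dots> \<le> L * (\<rho> * r * M / \<mu>\<^sup>2)"
    using norm_grad_y_f_le[of "(x, y)"] L_pos rho_nonneg r
    by (intro mult_left_mono divide_right_mono) (auto simp: b_def)
  finally have t2: "norm (jac x' y' (hess_inv x y b - hess_inv x' y' b)) \<le> L * (\<rho> * r * M / \<mu>\<^sup>2)" .
  have "norm (jac x' y' (hess_inv x' y' (b - b'))) \<le> L * norm (hess_inv x' y' (b - b'))"
    by (rule norm_jac_le)
  also have "\<dots> \<le> L * (norm (b - b') / \<mu>)"
    using L_pos by (intro mult_left_mono norm_hess_inv_le) auto
  also have "\<dots> \<le> L * (L * r / \<mu>)"
    using grad_y_f_lipschitz[of "(x, y)" "(x', y')"] L_pos mu_pos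
    by (intro mult_left_mono divide_right_mono) (auto simp: b_def b'_def r_def)
  finally have t3: "norm (jac x' y' (hess_inv x' y' (b - b'))) \<le> L * (L * r / \<mu>)" .
  have t0: "norm (grad_x f (x, y) - grad_x f (x', y')) \<le> L * r"
    unfolding r_def by (rule grad_x_f_lipschitz)
  have "hypergrad x y - hypergrad x' y' = (grad_x f (x, y) - grad_x f (x', y'))
      - ((jac x y - jac x' y') (hess_inv x y b) + jac x' y' (hess_inv x y b - hess_inv x' y' b)
         + jac x' y' (hess_inv x' y' (b - b')))"
    by (simp add: hypergrad_def b_def b'_def linear_diff[OF linear_jac] linear_diff[OF linear_hess_inv]
        algebra_simps)
  also have "norm \<dots> \<le> L * r + (\<tau> * r * (M / \<mu>) + L * (\<rho> * r * M / \<mu>\<^sup>2) + L * (L * r / \<mu>))"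
    using t0 t1 t2 t3 norm_triangle_ineq4[of "grad_x f (x, y) - grad_x f (x', y')"]
      norm_triangle_ineq[of "(jac x y - jac x' y') (hess_inv x y b) + jac x' y' (hess_inv x y b - hess_inv x' y' b)"]
      norm_triangle_ineq[of "(jac x y - jac x' y') (hess_inv x y b)"]
    by (smt (verit))
  also have "\<dots> = hypergrad_lip * r" by (simp add: hypergrad_lip_def power2_eq_square field_simps)
  finally show ?thesis by (simp add: r_def)
qed

lemma hypergrad_lip_nonneg: "hypergrad_lip \<ge> 0"
  using L_pos mu_pos M_nonneg tau_nonneg rho_nonneg by (simp add: hypergrad_lip_def)

lemma potH_eq_smooth_plus_h:
  "potH f g h (1/L) \<eta> T = (\<lambda>z. ereal (Phi f g (fst z) + 7/8 * (norm (inner_error \<eta> T z))\<^sup>2) + h (fst z))"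
proof
  fix z
  show "potH f g h (1/L) \<eta> T z = ereal (Phi f g (fst z) + 7/8 * (norm (inner_error \<eta> T z))\<^sup>2) + h (fst z)"
    by (cases "h (fst z)") (simp_all add: potH_def inner_error_def)
qed

lemma has_derivative_smooth_potential:
  assumes "((\<lambda>z. (norm (inner_error \<eta> T z))\<^sup>2) has_derivative (\<lambda>w. w \<bullet> q)) (at z1)"
  shows "((\<lambda>z. Phi f g (fst z) + 7/8 * (norm (inner_error \<eta> T z))\<^sup>2) has_derivative
      (\<lambda>w. w \<bullet> ((hypergrad (fst z1) (ystar g (fst z1)), 0) + (7/8) *\<^sub>R q))) (at z1)"
proof -
  have "((\<lambda>z. Phi f g (fst z)) has_derivative (\<lambda>w. fst w \<bullet> hypergrad (fst z1) (ystar g (fst z1)))) (at z1)"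
    by (rule has_derivative_compose[OF has_derivative_fst[OF has_derivative_ident] has_derivative_Phi])
  from has_derivative_add[OF this has_derivative_mult_right[OF assms, of "7/8"]]
  show ?thesis by (simp add: inner_add_right inner_prod_def algebra_simps split: prod.splits)
qed

lemma limiting_subdiff_potH_mem:
  assumes proper: "\<forall>x. h x \<noteq> -\<infinity>" "\<exists>x. h x \<noteq> \<infinity>"
    and eta: "0 \<le> \<eta>" "\<eta> \<le> 1" and beta: "\<beta> > 0"
    and x1: "x1 \<in> prox \<beta> h v"
  obtains q where
    "(hypergrad x1 (ystar g x1) + (1/\<beta>) *\<^sub>R (v - x1), 0) + (7/8) *\<^sub>R q
       \<in> limiting_subdiff (potH f g h (1/L) \<eta> T) (x1, y1)"
    and "norm q \<le> 2 * inner_error_lip T * norm (inner_error \<eta> T (x1, y1))"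
proof -
  obtain r1 where r1: "h x1 = ereal r1"
    using prox_not_infty[OF beta x1 proper(2)] proper(1) by (cases "h x1") auto
  obtain q where qd: "((\<lambda>z. (norm (inner_error \<eta> T z))\<^sup>2) has_derivative (\<lambda>w. w \<bullet> q)) (at (x1, y1))"
    and qn: "norm q \<le> 2 * inner_error_lip T * norm (inner_error \<eta> T (x1, y1))"
    using has_derivative_sq_norm_inner_error[OF eta] by blast
  have minorant: "h (fst z) \<ge> h (fst (x1, y1))
      + ereal (((1/\<beta>) *\<^sub>R (v - x1), 0) \<bullet> (z - (x1, y1)) - 1 / (2 * \<beta>) * (norm (z - (x1, y1)))\<^sup>2)" for z
    using prox_quadratic_minorant[OF beta x1 r1 proper(1)] beta by (intro quadratic_minorant_fst) auto
  have "(hypergrad (fst (x1, y1)) (ystar g (fst (x1, y1))), 0) + (7/8) *\<^sub>R q + ((1/\<beta>) *\<^sub>R (v - x1), 0)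
      \<in> frechet_subdiff (potH f g h (1/L) \<eta> T) (x1, y1)"
    unfolding potH_eq_smooth_plus_h
    by (rule frechet_subdiff_add_smooth[OF has_derivative_smooth_potential[OF qd] _ minorant])
      (use r1 beta in auto)
  moreover have "(hypergrad (fst (x1, y1)) (ystar g (fst (x1, y1))), 0) + (7/8) *\<^sub>R q + ((1/\<beta>) *\<^sub>R (v - x1), 0)
      = (hypergrad x1 (ystar g x1) + (1/\<beta>) *\<^sub>R (v - x1), 0) + (7/8) *\<^sub>R q"
    by (cases q) simp
  ultimately have "(hypergrad x1 (ystar g x1) + (1/\<beta>) *\<^sub>R (v - x1), 0) + (7/8) *\<^sub>R q
      \<in> limiting_subdiff (potH f g h (1/L) \<eta> T) (x1, y1)"
    using frechet_subdiff_subset_limiting_subdiff by (metis subsetD)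
  then show ?thesis using qn by (rule that)
qed

lemma norm_hypergrad_step_le:
  "norm (hypergrad x1 (ystar g x1) - hypergrad x0 y1)
     \<le> hypergrad_lip * ((1 + kappa) * norm (x1 - x0) + norm (y1 - ystar g x0))"
proof -
  have "dist (x1, ystar g x1) (x0, y1) \<le> norm (x1 - x0) + norm (ystar g x1 - y1)"
    using norm_Pair_le[of "x1 - x0" "ystar g x1 - y1"] by (simp add: dist_norm)
  also have "norm (ystar g x1 - y1) \<le> norm (ystar g x1 - ystar g x0) + norm (y1 - ystar g x0)"
    using norm_triangle_ineq4[of "ystar g x1 - ystar g x0" "y1 - ystar g x0"] by simp
  also have "norm (ystar g x1 - ystar g x0) \<le> kappa * norm (x1 - x0)" by (rule ystar_lipschitz)
  finally have "dist (x1, ystar g x1) (x0, y1) \<le> (1 + kappa) * norm (x1 - x0) + norm (y1 - ystar g x0)"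
    by (simp add: algebra_simps)
  with hypergrad_lipschitz[of x1 "ystar g x1" x0 y1] hypergrad_lip_nonneg show ?thesis
    by (meson mult_left_mono order_trans)
qed

lemma dist0_limiting_subdiff_potH_le:
  assumes proper: "\<forall>x. h x \<noteq> -\<infinity>" "\<exists>x. h x \<noteq> \<infinity>"
    and eta: "0 \<le> \<eta>" "\<eta> \<le> 1"
    and beta: "0 < \<beta>" "hypergrad_lip * (1 + kappa) \<le> 1 / \<beta>"
    and y2: "y2 = yT g (1/L) \<eta> T x1 y1"
    and v: "hess x0 y1 v = grad_y f (x0, y1)"
    and x1: "x1 \<in> prox \<beta> h (x0 - \<beta> *\<^sub>R (grad_x f (x0, y1) - jac x0 y1 v))"
  shows "dist0 (limiting_subdiff (potH f g h (1/L) \<eta> T) (x1, y1))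
          \<le> ereal (2 / \<beta> * norm (x1 - x0) + hypergrad_lip * norm (y1 - ystar g x0)
                   + 7/4 * inner_error_lip T * norm (y2 - ystar g x1))"
proof -
  define G0 where "G0 = hypergrad x0 y1"
  have "grad_x f (x0, y1) - jac x0 y1 v = G0"
    using v hess_inv_hess[of x0 y1 v] by (simp add: G0_def hypergrad_def)
  then obtain q where
    u: "(hypergrad x1 (ystar g x1) + (1/\<beta>) *\<^sub>R (x0 - \<beta> *\<^sub>R G0 - x1), 0) + (7/8) *\<^sub>R q
       \<in> limiting_subdiff (potH f g h (1/L) \<eta> T) (x1, y1)"
    and qn: "norm q \<le> 2 * inner_error_lip T * norm (y2 - ystar g x1)"
    using limiting_subdiff_potH_mem[OF proper eta beta(1)] x1 by (metis inner_error_def fst_conv snd_conv y2)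
  define w where "w = hypergrad x1 (ystar g x1) + (1/\<beta>) *\<^sub>R (x0 - \<beta> *\<^sub>R G0 - x1)"
  have "w = (hypergrad x1 (ystar g x1) - G0) - (1/\<beta>) *\<^sub>R (x1 - x0)"
    using beta(1) by (simp add: w_def algebra_simps)
  then have "norm w \<le> norm (hypergrad x1 (ystar g x1) - G0) + 1/\<beta> * norm (x1 - x0)"
    using beta(1) norm_triangle_ineq4[of "hypergrad x1 (ystar g x1) - G0" "(1/\<beta>) *\<^sub>R (x1 - x0)"] by simp
  moreover have "norm ((w, 0::'b) + (7/8) *\<^sub>R q) \<le> norm w + 7/8 * norm q"
    using norm_triangle_ineq[of "(w, 0::'b)" "(7/8) *\<^sub>R q"] by (simp add: norm_Pair)
  ultimately have "norm ((w, 0::'b) + (7/8) *\<^sub>R q)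
      \<le> 2 / \<beta> * norm (x1 - x0) + hypergrad_lip * norm (y1 - ystar g x0)
        + 7/4 * inner_error_lip T * norm (y2 - ystar g x1)"
    using norm_hypergrad_step_le[of x1 x0 y1] mult_right_mono[OF beta(2), of "norm (x1 - x0)"] qn
    unfolding G0_def by (simp add: algebra_simps)
  then show ?thesis using dist0_le_norm[OF u[folded w_def]] order_trans by fastforce
qed

lemma hypergrad_lip_sq_le:
  "hypergrad_lip\<^sup>2 \<le> 3 * L\<^sup>2 + 3 * \<tau>\<^sup>2 * M\<^sup>2 / \<mu>\<^sup>2
                          + 6 * L\<^sup>2 * (1 + sqrt (L / \<mu>))\<^sup>2 * (L / \<mu> + \<rho> * M / \<mu>\<^sup>2)\<^sup>2"
proof -
  define a b c where "a = L" "b = \<tau> * M / \<mu>" "c = L * (L / \<mu> + \<rho> * M / \<mu>\<^sup>2)"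
  have "hypergrad_lip = a + b + c"
    using mu_pos by (simp add: hypergrad_lip_def a_b_c_def power2_eq_square field_simps)
  moreover have "(a + b + c)\<^sup>2 \<le> 3 * (a\<^sup>2 + b\<^sup>2 + c\<^sup>2)"
    using sum_squares_ge_zero[of "a - b" "b - c"] zero_le_power2[of "a - c"]
    by (simp add: power2_eq_square algebra_simps)
  moreover have "c\<^sup>2 \<le> L\<^sup>2 * (1 + sqrt (L / \<mu>))\<^sup>2 * (L / \<mu> + \<rho> * M / \<mu>\<^sup>2)\<^sup>2"
  proof -
    have "1 \<le> (1 + sqrt (L / \<mu>))\<^sup>2" using mu_pos L_pos by (intro one_le_power) simp
    moreover have "0 \<le> L\<^sup>2 * (L / \<mu> + \<rho> * M / \<mu>\<^sup>2)\<^sup>2" by simp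
    ultimately have "L\<^sup>2 * (L / \<mu> + \<rho> * M / \<mu>\<^sup>2)\<^sup>2 * 1 \<le> L\<^sup>2 * (L / \<mu> + \<rho> * M / \<mu>\<^sup>2)\<^sup>2 * (1 + sqrt (L / \<mu>))\<^sup>2"
      by (rule mult_left_mono)
    then show ?thesis by (simp add: a_b_c_def power_mult_distrib ac_simps)
  qed
  moreover have "b\<^sup>2 = \<tau>\<^sup>2 * M\<^sup>2 / \<mu>\<^sup>2" by (simp add: a_b_c_def power_mult_distrib power_divide)
  ultimately show ?thesis by (simp add: a_b_c_def(1)) (use zero_le_power2[of c] in linarith)
qed

end

lemma step_size_bound:
  fixes c k P G \<beta> :: real
  assumes "0 \<le> c" "1 \<le> k" "c\<^sup>2 \<le> G" "0 \<le> P" "0 < \<beta>" "\<beta> \<le> 1 / 2 * inverse (P + G + k\<^sup>2)"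
  shows "c * (1 + k) \<le> 1 / \<beta>"
proof -
  have "c * (1 + k) \<le> c\<^sup>2 + (1 + k)\<^sup>2 / 4"
    using zero_le_power2[of "c - (1 + k) / 2"] by (simp add: power2_eq_square algebra_simps)
  also have "(1 + k)\<^sup>2 / 4 \<le> k\<^sup>2"
  proof -
    have "0 \<le> (k - 1) * (3 * k + 1)" using assms(2) by simp
    then show ?thesis by (simp add: power2_eq_square algebra_simps)
  qed
  finally have "c * (1 + k) \<le> P + G + k\<^sup>2" using assms(3,4) by linarith
  moreover have "2 * (P + G + k\<^sup>2) \<le> 1 / \<beta>"
  proof -
    have "0 < P + G + k\<^sup>2" using assms(2-4) by (smt (verit) zero_le_power2 one_le_power)
    then show ?thesis using assms(5,6) by (simp add: inverse_eq_divide field_simps)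
  qed
  ultimately show ?thesis using assms(1,2,4) \<open>c\<^sup>2 \<le> G\<close> by (smt (verit) zero_le_power2)
qed

theorem mainTheorem6:
  fixes f g :: "'a::euclidean_space \<times> 'b::euclidean_space \<Rightarrow> real"
    and h :: "'a \<Rightarrow> ereal"
    and \<mu> L M \<tau> \<rho> \<beta> :: real and T :: nat
    and xs :: "nat \<Rightarrow> 'a" and ys vhat :: "nat \<Rightarrow> 'b"
  defines "\<kappa> \<equiv> L / \<mu>"
    and "L\<^sub>\<Phi> \<equiv> L + (2 * L\<^sup>2 + \<tau> * M\<^sup>2) / \<mu> + (\<rho> * L * M + L ^ 3 + \<tau> * M * L) / \<mu>\<^sup>2
                 + \<rho> * L\<^sup>2 * M / \<mu> ^ 3"
    and "\<Gamma> \<equiv> 3 * L\<^sup>2 + 3 * \<tau>\<^sup>2 * M\<^sup>2 / \<mu>\<^sup>2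
                 + 6 * L\<^sup>2 * (1 + sqrt (L / \<mu>))\<^sup>2 * (L / \<mu> + \<rho> * M / \<mu>\<^sup>2)\<^sup>2"
    and "\<alpha> \<equiv> 1 / L"
    and "\<eta> \<equiv> (sqrt (L / \<mu>) - 1) / (sqrt (L / \<mu>) + 1)"
  assumes mu_pos: "\<mu> > 0" and L_pos: "L > 0"
    and consts_nonneg: "M \<ge> 0" "\<tau> \<ge> 0" "\<rho> \<ge> 0"
    \<comment> \<open>A1\<close>
    and g_sc: "\<forall>x. strongly_convex \<mu> (\<lambda>y. g (x, y))"
    and h_proper: "\<forall>x. h x \<noteq> -\<infinity>" "\<exists>x. h x \<noteq> \<infinity>"
    and h_lsc: "\<forall>x. h x \<le> Liminf (at x) h"
    and bdd_below: "\<exists>c. \<forall>x. ereal c \<le> ereal (Phi f g x) + h x"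
    and bdd_sublevel: "\<forall>c. bounded {x. ereal (Phi f g x) + h x \<le> ereal c}"
    \<comment> \<open>A2 (joint differentiability and Lipschitz conditions)\<close>
    and f_diff: "\<forall>z. f differentiable (at z)"
    and g_diff: "\<forall>z. g differentiable (at z)"
    and f_lip: "\<forall>z z'. \<bar>f z - f z'\<bar> \<le> M * dist z z'"
    and gradf_lip: "\<forall>z z'. norm (grad f z - grad f z') \<le> L * dist z z'"
    and gradg_lip: "\<forall>z z'. norm (grad g z - grad g z') \<le> L * dist z z'"
    and hess_diff: "\<forall>x y. (\<lambda>y. grad_y g (x, y)) differentiable (at y)"
    and jac_diff: "\<forall>x y. (\<lambda>x. grad_y g (x, y)) differentiable (at x)"
    and jac_lip: "\<forall>z z'. onorm (\<lambda>v. jac_xy g z v - jac_xy g z' v) \<le> \<tau> * dist z z'"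
    and hess_lip: "\<forall>z z'. onorm (\<lambda>v. hess_yy g z v - hess_yy g z' v) \<le> \<rho> * dist z z'"
    \<comment> \<open>A3\<close>
    and A3: "\<forall>z. limiting_subdiff
               (\<lambda>z. ereal ((norm (yT g \<alpha> \<eta> T (fst z) (snd z) - ystar g (fst z)))\<^sup>2)) z \<noteq> {}"
    \<comment> \<open>parameters\<close>
    and kappa_gt: "\<kappa> > 1"
    and beta: "0 < \<beta>" "\<beta> \<le> 1 / 2 * inverse (L\<^sub>\<Phi> + \<Gamma> + \<kappa>\<^sup>2)"
    and T_ge: "real T \<ge> ln (8 * (1 + \<kappa>)) / ln (inverse (1 - 1 / sqrt \<kappa>))"
    \<comment> \<open>the iterates of PBA\<close>
    and ys_step: "\<forall>k. ys (Suc k) = yT g \<alpha> \<eta> T (xs k) (ys k)"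
    and vhat_sol: "\<forall>k. hess_yy g (xs k, ys (Suc k)) (vhat k) = grad_y f (xs k, ys (Suc k))"
    and xs_step: "\<forall>k. xs (Suc k) \<in> prox \<beta> h (xs k - \<beta> *\<^sub>R
                     (grad_x f (xs k, ys (Suc k)) - jac_xy g (xs k, ys (Suc k)) (vhat k)))"
  shows "\<forall>k. dist0 (limiting_subdiff (potH f g h \<alpha> \<eta> T) (xs (Suc k), ys (Suc k)))
           \<le> ereal (2 / \<beta> * norm (xs (Suc k) - xs k)
                    + sqrt \<Gamma> * norm (ys (Suc k) - ystar g (xs k))
                    + 2 * ((5/2) ^ (T + 1) + \<kappa>) * norm (ys (Suc (Suc k)) - ystar g (xs (Suc k))))"
proof -
  interpret bilevel g \<mu> L \<tau> \<rho> f M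
    using mu_pos consts_nonneg g_sc g_diff gradg_lip hess_diff jac_diff jac_lip hess_lip f_diff f_lip gradf_lip
    by unfold_locales auto
  have kappa: "kappa = \<kappa>" and \<alpha>: "\<alpha> = 1 / L" by (simp_all add: kappa_def assms(1,4))
  obtain s where "sqrt (L / \<mu>) = s" "1 < s" using kappa_gt by (simp add: assms(1))
  then have eta: "0 \<le> \<eta>" "\<eta> \<le> 1" by (simp_all add: assms(5) divide_le_eq_1)
  have hypergrad_lip_le: "hypergrad_lip \<le> sqrt \<Gamma>"
    using hypergrad_lip_sq_le hypergrad_lip_nonneg by (simp add: assms(3) real_le_rsqrt)
  have "0 \<le> L\<^sub>\<Phi>" using mu_pos L_pos consts_nonneg by (simp add: assms(2))
  then have step: "hypergrad_lip * (1 + kappa) \<le> 1 / \<beta>"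
    using step_size_bound[OF hypergrad_lip_nonneg _ _ _ beta] hypergrad_lip_sq_le kappa_gt
    by (simp add: kappa assms(3))
  have inner_lip_le: "7/4 * inner_error_lip T \<le> 2 * ((5/2) ^ (T + 1) + \<kappa>)"
    using kappa_gt by (simp add: inner_error_lip_def kappa)
  show ?thesis
  proof
    fix k
    have "dist0 (limiting_subdiff (potH f g h \<alpha> \<eta> T) (xs (Suc k), ys (Suc k)))
        \<le> ereal (2 / \<beta> * norm (xs (Suc k) - xs k) + hypergrad_lip * norm (ys (Suc k) - ystar g (xs k))
                 + 7/4 * inner_error_lip T * norm (ys (Suc (Suc k)) - ystar g (xs (Suc k))))"
      unfolding \<alpha> using ys_step[unfolded \<alpha>] vhat_sol xs_step
      by (intro dist0_limiting_subdiff_potH_le[OF h_proper eta beta(1) step, where v="vhat k"]) auto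
    also have "\<dots> \<le> ereal (2 / \<beta> * norm (xs (Suc k) - xs k) + sqrt \<Gamma> * norm (ys (Suc k) - ystar g (xs k))
                 + 2 * ((5/2) ^ (T + 1) + \<kappa>) * norm (ys (Suc (Suc k)) - ystar g (xs (Suc k))))"
      using hypergrad_lip_le inner_lip_le
      by (intro ereal_less_eq(3)[THEN iffD2] add_mono mult_right_mono order_refl) auto
    finally show "dist0 (limiting_subdiff (potH f g h \<alpha> \<eta> T) (xs (Suc k), ys (Suc k)))
        \<le> ereal (2 / \<beta> * norm (xs (Suc k) - xs k) + sqrt \<Gamma> * norm (ys (Suc k) - ystar g (xs k))
                 + 2 * ((5/2) ^ (T + 1) + \<kappa>) * norm (ys (Suc (Suc k)) - ystar g (xs (Suc k))))" .
  qed
qed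

end
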